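(* Let $k$ be a field of characteristic $p>2$ ($p$ prime). The $T$-space $(W')^S$ of $k_1\langle X\rangle$ is not finitely based.
   Context: $X=\{x_i\mid i\ge0\}$ countably infinite; $k_1\langle X\rangle$ the free unitary associative $k$-algebra on $X$; $[a,b]=ab-ba$. A $T$-space is a subspace invariant under all endomorphisms of $k_1\langle X\rangle$; $H^S$ is the smallest $T$-space containing $H$; a $T$-space is finitely based if it equals $H^S$ for some finite $H$. $\kappa(u,v)=[u,v]u^{p-1}v^{p-1}$, $w_m=\prod_{r=1}^m\kappa(x_{2r-1},x_{2r})$, $w_m(u_1,\ldots,u_{2m})$ the image under $x_j\mapsto u_j$. For $m\ge1$, $I_m$ is the set of strictly increasing functions $\{1,\ldots,2m\}\to\mathbb{Z}^+$, $W_m=\{w_j(x_{f(1)},\ldots,x_{f(2j)})\mid 1\le j\le m,\ f\in I_j\}$, $W=\bigcup_{m\ge1}W_m$, and $W'=\{1\}\cup W$. *)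

theory Defs
  imports Main "HOL-Computational_Algebra.Primes"
begin

text \<open>The free unitary associative k-algebra k_1<X> on X = {x_i | i >= 0}:
  an element is a finitely supported function from words (lists of variable
  indices) to k; the word [i1,...,in] stands for the monomial x_i1 ... x_in.\<close>

type_synonym 'k fa = "nat list \<Rightarrow> 'k"

definition fa_carrier :: "('k::field) fa set" where
  "fa_carrier = {f. finite {w. f w \<noteq> 0}}"

definition fa_zero :: "('k::field) fa" where
  "fa_zero = (\<lambda>w. 0)"

definition fa_one :: "('k::field) fa" where
  "fa_one = (\<lambda>w. if w = [] then 1 else 0)"

definition fa_var :: "nat \<Rightarrow> ('k::field) fa" where
  "fa_var i = (\<lambda>w. if w = [i] then 1 else 0)"

definition fa_add :: "('k::field) fa \<Rightarrow> 'k fa \<Rightarrow> 'k fa" where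
  "fa_add f g = (\<lambda>w. f w + g w)"

definition fa_sub :: "('k::field) fa \<Rightarrow> 'k fa \<Rightarrow> 'k fa" where
  "fa_sub f g = (\<lambda>w. f w - g w)"

definition fa_smult :: "'k::field \<Rightarrow> 'k fa \<Rightarrow> 'k fa" where
  "fa_smult c f = (\<lambda>w. c * f w)"

definition fa_mult :: "('k::field) fa \<Rightarrow> 'k fa \<Rightarrow> 'k fa" where
  "fa_mult f g = (\<lambda>w. \<Sum>i\<le>length w. f (take i w) * g (drop i w))"

definition fa_prodlist :: "('k::field) fa list \<Rightarrow> 'k fa" where
  "fa_prodlist xs = foldr fa_mult xs fa_one"

definition fa_pow :: "('k::field) fa \<Rightarrow> nat \<Rightarrow> 'k fa" where
  "fa_pow a n = fa_prodlist (replicate n a)"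

definition fa_comm :: "('k::field) fa \<Rightarrow> 'k fa \<Rightarrow> 'k fa" where
  "fa_comm a b = fa_sub (fa_mult a b) (fa_mult b a)"

definition fa_subst :: "(nat \<Rightarrow> ('k::field) fa) \<Rightarrow> 'k fa \<Rightarrow> 'k fa" where
  "fa_subst \<sigma> f = (\<lambda>v. \<Sum>w\<in>{w. f w \<noteq> 0}. f w * fa_prodlist (map \<sigma> w) v)"

definition is_subspace :: "('k::field) fa set \<Rightarrow> bool" where
  "is_subspace V \<longleftrightarrow> V \<subseteq> fa_carrier \<and> fa_zero \<in> V \<and>
     (\<forall>f\<in>V. \<forall>g\<in>V. fa_add f g \<in> V) \<and> (\<forall>c. \<forall>f\<in>V. fa_smult c f \<in> V)"

definition T_space :: "('k::field) fa set \<Rightarrow> bool" where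
  "T_space V \<longleftrightarrow> is_subspace V \<and>
     (\<forall>\<sigma>. (\<forall>i. \<sigma> i \<in> fa_carrier) \<longrightarrow> (\<forall>f\<in>V. fa_subst \<sigma> f \<in> V))"

text \<open>H^S: the smallest T-space containing H.\<close>
definition T_closure :: "('k::field) fa set \<Rightarrow> 'k fa set" where
  "T_closure H = \<Inter>{V. T_space V \<and> H \<subseteq> V}"

definition finitely_based :: "('k::field) fa set \<Rightarrow> bool" where
  "finitely_based V \<longleftrightarrow> (\<exists>H. finite H \<and> H \<subseteq> fa_carrier \<and> V = T_closure H)"

definition kappa :: "nat \<Rightarrow> ('k::field) fa \<Rightarrow> 'k fa \<Rightarrow> 'k fa" where
  "kappa p u v = fa_mult (fa_mult (fa_comm u v) (fa_pow u (p - 1))) (fa_pow v (p - 1))"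

definition w_poly :: "nat \<Rightarrow> nat \<Rightarrow> (nat \<Rightarrow> ('k::field) fa) \<Rightarrow> 'k fa" where
  "w_poly p m u = fa_prodlist (map (\<lambda>r. kappa p (u (2*r - 1)) (u (2*r))) [1..<m+1])"

text \<open>I_m: strictly increasing functions {1,...,2m} -> Z^+ (values outside
  {1..2m} irrelevant).\<close>
definition I_set :: "nat \<Rightarrow> (nat \<Rightarrow> nat) set" where
  "I_set m = {f. strict_mono_on {1..2*m} f \<and> (\<forall>r\<in>{1..2*m}. 1 \<le> f r)}"

definition W_set :: "nat \<Rightarrow> nat \<Rightarrow> ('k::field) fa set" where
  "W_set p m = {w_poly p j (\<lambda>r. fa_var (f r)) | j f. 1 \<le> j \<and> j \<le> m \<and> f \<in> I_set j}"

definition W_all :: "nat \<Rightarrow> ('k::field) fa set" where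
  "W_all p = (\<Union>m\<in>{1..}. W_set p m)"

definition W' :: "nat \<Rightarrow> ('k::field) fa set" where
  "W' p = {fa_one} \<union> W_all p"

end

theory Submission
  imports Defs
begin

text \<open>
  Let A = k[t_i] \<otimes> \<Lambda>(e_i) be the free supercommutative algebra and d its de Rham differential,
  d t_i = e_i. On even elements a \<mapsto> a + d a is multiplicative, so B = {a + d a | a even} is a
  subalgebra, and a direct computation gives \<kappa>(a + d a, c + d c) = 2 \<omega>(a) \<omega>(c) with
  \<omega>(a) = a^(p-1) d a. Writing a as a polynomial in the t_i plus square-zero terms shows that
  \<omega>(a) is closed and cohomologous to a closed form of exterior degree 1, so every value of w_j
  on B is, up to an exact form, of exterior degree 2j. In characteristic p the coefficient of
  t_1^(p-1) \<dots> t_(2M+2)^(p-1) e_1 \<dots> e_(2M+2) vanishes on exact forms. Hence the polynomials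
  all of whose values on B have zero coefficient there form a T-space containing 1 and W_M but
  not w_(M+1)(x_1, \<dots>, x_(2M+2)), whose value at x_i = t_i + e_i is 2^(M+1) times that monomial.
  So the T-spaces generated by {1} \<union> W_M form a strictly ascending chain with union (W')^S.

  Elements of A are realised as multiplication operators on the coefficient functions of A,
  and d as the supercommutator with the operator of exterior differentiation.
\<close>

section \<open>Linear operators on coefficient functions\<close>

text \<open>The index (a, S) stands for the monomial t^a e_S, where e_S is the product of the e_i,
  i \<in> S, in increasing order; coefficient functions are arbitrary, i.e. formal infinite sums.\<close>

type_synonym 'k svec = "(nat \<Rightarrow> nat) \<times> nat set \<Rightarrow> 'k"

definition linear_svec :: "('k::field svec \<Rightarrow> 'k svec) \<Rightarrow> bool" where
  "linear_svec F \<longleftrightarrow> (\<forall>u v. F (\<lambda>b. u b + v b) = (\<lambda>b. F u b + F v b)) \<and>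
                      (\<forall>c u. F (\<lambda>b. c * u b) = (\<lambda>b. c * F u b))"

lemma linear_svecD_add: "linear_svec F \<Longrightarrow> F (\<lambda>b. u b + v b) = (\<lambda>b. F u b + F v b)"
  by (simp add: linear_svec_def)

lemma linear_svecD_smult: "linear_svec F \<Longrightarrow> F (\<lambda>b. c * u b) = (\<lambda>b. c * F u b)"
  by (simp add: linear_svec_def)

typedef (overloaded) 'k linop = "{F :: 'k::field svec \<Rightarrow> 'k svec. linear_svec F}"
  morphisms lapp Linop
  by (rule exI[of _ id]) (auto simp: linear_svec_def)

setup_lifting type_definition_linop

instantiation linop :: (field) ring_1
begin

lift_definition zero_linop :: "'a linop" is "\<lambda>v b. 0"
  by (simp add: linear_svec_def)
lift_definition one_linop :: "'a linop" is "\<lambda>v. v"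
  by (simp add: linear_svec_def)
lift_definition plus_linop :: "'a linop \<Rightarrow> 'a linop \<Rightarrow> 'a linop" is "\<lambda>F G v b. F v b + G v b"
  by (simp add: linear_svec_def algebra_simps)
lift_definition uminus_linop :: "'a linop \<Rightarrow> 'a linop" is "\<lambda>F v b. - F v b"
  by (simp add: linear_svec_def algebra_simps)
lift_definition minus_linop :: "'a linop \<Rightarrow> 'a linop \<Rightarrow> 'a linop" is "\<lambda>F G v b. F v b - G v b"
  by (simp add: linear_svec_def algebra_simps)
lift_definition times_linop :: "'a linop \<Rightarrow> 'a linop \<Rightarrow> 'a linop" is "\<lambda>F G v. F (G v)"
  by (simp add: linear_svec_def)

instance
proof
  fix a b c :: "'a linop"
  show "a + b + c = a + (b + c)" by transfer (simp add: algebra_simps)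
  show "a + b = b + a" by transfer (simp add: algebra_simps)
  show "0 + a = a" by transfer simp
  show "- a + a = 0" by transfer simp
  show "a - b = a + - b" by transfer simp
  show "a * b * c = a * (b * c)" by transfer simp
  show "1 * a = a" by transfer simp
  show "a * 1 = a" by transfer simp
  show "(a + b) * c = a * c + b * c" by transfer simp
  show "a * (b + c) = a * b + a * c" by transfer (simp add: linear_svecD_add)
  have "lapp (0::'a linop) (\<lambda>b. 1) \<noteq> lapp 1 (\<lambda>b. 1)"
    by transfer (simp add: fun_eq_iff)
  then show "(0::'a linop) \<noteq> 1" by metis
qed

end

lemma lapp_plus: "lapp (X + Y) v = (\<lambda>b. lapp X v b + lapp Y v b)" by transfer simp
lemma lapp_minus: "lapp (X - Y) v = (\<lambda>b. lapp X v b - lapp Y v b)" by transfer simp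
lemma lapp_uminus: "lapp (- X) v = (\<lambda>b. - lapp X v b)" by transfer simp
lemma lapp_times: "lapp (X * Y) v = lapp X (lapp Y v)" by transfer simp
lemma lapp_one: "lapp 1 v = v" by transfer simp
lemma lapp_zero: "lapp 0 v = (\<lambda>b. 0)" by transfer simp

lemma lapp_smult_vec: "lapp X (\<lambda>b. c * u b) = (\<lambda>b. c * lapp X u b)"
  using lapp[of X] by (simp add: linear_svecD_smult)

lemma lapp_zero_vec: "lapp X (\<lambda>b. 0) = (\<lambda>b. 0)"
  using lapp_smult_vec[of X 0] by simp

lemma linop_eqI: "(\<And>v a S. lapp X v (a, S) = lapp Y v (a, S)) \<Longrightarrow> X = Y"
  by (metis lapp_inject ext surj_pair)

lift_definition scalar :: "'k::field \<Rightarrow> 'k linop" is "\<lambda>c v b. c * v b"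
  by (simp add: linear_svec_def algebra_simps)

lemma lapp_scalar: "lapp (scalar c) v = (\<lambda>b. c * v b)" by transfer simp

lemma scalar_commute: "scalar c * X = X * scalar c"
  by (rule linop_eqI) (simp add: lapp_times lapp_scalar lapp_smult_vec)

lemma scalar_mult: "scalar a * scalar b = scalar (a * b)"
  by (rule linop_eqI) (simp add: lapp_times lapp_scalar)

lemma scalar_add: "scalar (a + b) = scalar a + scalar b"
  by (rule linop_eqI) (simp add: lapp_plus lapp_scalar algebra_simps)

lemma scalar_diff: "scalar (a - b) = scalar a - scalar b"
  by (rule linop_eqI) (simp add: lapp_minus lapp_scalar algebra_simps)

lemma scalar_one: "scalar 1 = 1"
  by (rule linop_eqI) (simp add: lapp_one lapp_scalar)

lemma scalar_zero: "scalar 0 = 0"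
  by (rule linop_eqI) (simp add: lapp_zero lapp_scalar)

lemma scalar_minus_one: "scalar (-1) * X = - X"
  by (rule linop_eqI) (simp add: lapp_times lapp_scalar lapp_uminus)

lemma scalar_of_nat: "scalar (of_nat n) = of_nat n"
  by (induction n) (simp_all add: scalar_zero scalar_add scalar_one)

lemma scalar_sum: "scalar (sum g A) = (\<Sum>x\<in>A. scalar (g x))"
  by (induction A rule: infinite_finite_induct) (simp_all add: scalar_zero scalar_add)

lemma lapp_of_nat: "lapp (of_nat m :: 'k::field linop) v = (\<lambda>b. of_nat m * v b)"
  by (simp add: scalar_of_nat[symmetric] lapp_scalar)

lemma linop_double_eq_0:
  assumes "(2::'k::field) \<noteq> 0" and "X + X = (0::'k linop)"
  shows "X = 0"
proof -
  have "scalar (2::'k) = 2"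
    by (metis of_nat_numeral scalar_of_nat)
  then have "scalar 2 * X = X + X"
    by (simp add: mult_2)
  then have "scalar (1/2) * (scalar 2 * X) = 0" using assms(2) by simp
  then show ?thesis using assms(1) by (simp add: mult.assoc[symmetric] scalar_mult scalar_one)
qed

section \<open>Multiplication operators and the de Rham differential\<close>

definition ext_sign :: "nat \<Rightarrow> nat set \<Rightarrow> 'k::field" where
  "ext_sign i S = (-1) ^ card {j\<in>S. j < i}"

lift_definition mult_t :: "nat \<Rightarrow> 'k::field linop" is
  "\<lambda>i v (a, S). if 0 < a i then v (a(i := a i - 1), S) else 0"
  by (auto simp: linear_svec_def fun_eq_iff)

lift_definition mult_e :: "nat \<Rightarrow> 'k::field linop" is
  "\<lambda>i v (a, S). if finite S \<and> i \<in> S then ext_sign i S * v (a, S - {i}) else 0"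
  by (auto simp: linear_svec_def fun_eq_iff algebra_simps)

lift_definition parity :: "'k::field linop" is
  "\<lambda>v (a, S). (-1) ^ card S * v (a, S)"
  by (auto simp: linear_svec_def fun_eq_iff algebra_simps)

text \<open>Exterior differentiation d = \<Sum> e_j \<partial>/\<partial>t_j, written on coefficients.\<close>

lift_definition dr :: "'k::field linop" is
  "\<lambda>v (a, S). if finite S
     then (\<Sum>j\<in>S. ext_sign j S * of_nat (a j + 1) * v (a(j := a j + 1), S - {j})) else 0"
  by (auto simp: linear_svec_def fun_eq_iff algebra_simps sum.distrib sum_distrib_left)

lemma lapp_mult_t: "lapp (mult_t i) v (a, S) = (if 0 < a i then v (a(i := a i - 1), S) else 0)"
  by transfer simp

lemma lapp_mult_e:
  "lapp (mult_e i) v (a, S) = (if finite S \<and> i \<in> S then ext_sign i S * v (a, S - {i}) else 0)"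
  by transfer simp

lemma lapp_parity: "lapp parity v (a, S) = (-1) ^ card S * v (a, S)"
  by transfer simp

lemma lapp_dr: "lapp dr v (a, S) = (if finite S
     then (\<Sum>j\<in>S. ext_sign j S * of_nat (a j + 1) * v (a(j := a j + 1), S - {j})) else 0)"
  by transfer simp

lemma ext_sign_remove_less:
  assumes "finite S" "i \<in> S" "i < j"
  shows "ext_sign j S = - (ext_sign j (S - {i}) :: 'k::field)"
proof -
  have "{l\<in>S. l < j} = insert i {l\<in>S - {i}. l < j}" using assms by auto
  moreover have "finite {l\<in>S - {i}. l < j}" using assms by auto
  ultimately show ?thesis unfolding ext_sign_def by simp
qed

lemma ext_sign_remove_greater: "j < i \<Longrightarrow> ext_sign j S = (ext_sign j (S - {i}) :: 'k::field)"
  unfolding ext_sign_def by (rule arg_cong[where f="\<lambda>T. (-1) ^ card T"]) auto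

lemma ext_sign_swap:
  assumes "finite S" "i \<in> S" "j \<in> S" "i \<noteq> j"
  shows "ext_sign j S * ext_sign i (S - {j}) = - (ext_sign i S * (ext_sign j (S - {i}) :: 'k::field))"
proof (cases "i < j")
  case True
  then have "ext_sign j S = - (ext_sign j (S - {i}) :: 'k)"
    using assms by (intro ext_sign_remove_less) auto
  moreover have "ext_sign i S = (ext_sign i (S - {j}) :: 'k)"
    using True by (intro ext_sign_remove_greater)
  ultimately show ?thesis by simp
next
  case False
  then have "j < i" using assms by simp
  then have "ext_sign i S = - (ext_sign i (S - {j}) :: 'k)"
    using assms by (intro ext_sign_remove_less) auto
  moreover have "ext_sign j S = (ext_sign j (S - {i}) :: 'k)"
    using \<open>j < i\<close> by (intro ext_sign_remove_greater)
  ultimately show ?thesis by simp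
qed

lemma mult_t_commute: "mult_t i * mult_t j = mult_t j * mult_t i"
  by (rule linop_eqI) (auto simp: lapp_times lapp_mult_t fun_upd_twist)

lemma mult_t_mult_e_commute: "mult_t i * mult_e j = mult_e j * mult_t i"
  by (rule linop_eqI) (auto simp: lapp_times lapp_mult_t lapp_mult_e)

lemma mult_e_square: "mult_e i * mult_e i = 0"
  by (rule linop_eqI) (auto simp: lapp_times lapp_mult_e lapp_zero)

lemma mult_e_anticommute: "mult_e i * mult_e j = - (mult_e j * mult_e i :: 'k::field linop)"
proof (cases "i = j")
  case True
  then show ?thesis by (simp add: mult_e_square)
next
  case False
  show ?thesis
  proof (rule linop_eqI)
    fix v :: "'k svec" and a S
    show "lapp (mult_e i * mult_e j) v (a, S) = lapp (- (mult_e j * mult_e i)) v (a, S)"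
    proof (cases "finite S \<and> i \<in> S \<and> j \<in> S")
      case True
      moreover have "S - {j} - {i} = S - {i} - {j}" by auto
      ultimately show ?thesis using ext_sign_swap[of S i j, where 'k='k] \<open>i \<noteq> j\<close>
        by (simp add: lapp_times lapp_mult_e lapp_uminus mult.assoc[symmetric])
    qed (auto simp: lapp_times lapp_mult_e lapp_uminus)
  qed
qed

lemma parity_square: "parity * parity = 1"
  by (rule linop_eqI) (simp add: lapp_times lapp_parity lapp_one power_mult_distrib[symmetric])

lemma parity_mult_t: "parity * mult_t i = mult_t i * parity"
  by (rule linop_eqI) (simp add: lapp_times lapp_parity lapp_mult_t)

lemma parity_mult_e: "parity * mult_e i = - (mult_e i * parity :: 'k::field linop)"
proof (rule linop_eqI)
  fix v :: "'k svec" and a S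
  show "lapp (parity * mult_e i) v (a, S) = lapp (- (mult_e i * parity)) v (a, S)"
  proof (cases "finite S \<and> i \<in> S")
    case True
    then obtain m where "card S = Suc m" "card (S - {i}) = m"
      by (metis card_Suc_Diff1)
    then show ?thesis using True by (simp add: lapp_times lapp_parity lapp_mult_e lapp_uminus)
  qed (auto simp: lapp_times lapp_parity lapp_mult_e lapp_uminus)
qed

lemma parity_dr: "parity * dr = - (dr * parity :: 'k::field linop)"
proof (rule linop_eqI)
  fix v :: "'k svec" and a S
  show "lapp (parity * dr) v (a, S) = lapp (- (dr * parity)) v (a, S)"
  proof (cases "finite S")
    case True
    have "(\<Sum>j\<in>S. ext_sign j S * of_nat (a j + 1) *
                 ((-1) ^ card (S - {j}) * v (a(j := a j + 1), S - {j})))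
        = (\<Sum>j\<in>S. - ((-1) ^ card S * (ext_sign j S * of_nat (a j + 1) *
                 v (a(j := a j + 1), S - {j}))))"
    proof (rule sum.cong)
      fix j assume "j \<in> S"
      then have "card S = Suc (card (S - {j}))" using True by (metis card_Suc_Diff1)
      then show "ext_sign j S * of_nat (a j + 1) * ((-1) ^ card (S - {j}) * v (a(j := a j + 1), S - {j}))
        = - ((-1) ^ card S * (ext_sign j S * of_nat (a j + 1) * v (a(j := a j + 1), S - {j})))"
        by simp
    qed simp
    then show ?thesis using True
      by (simp add: lapp_times lapp_parity lapp_dr lapp_uminus sum_distrib_left sum_negf)
  qed (simp add: lapp_times lapp_parity lapp_dr lapp_uminus)
qed

lemma dr_mult_t_commutator: "dr * mult_t i - mult_t i * dr = (mult_e i :: 'k::field linop)"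
proof (rule linop_eqI)
  fix v :: "'k svec" and a S
  define dt where "dt j = ext_sign j S * of_nat (a j + 1) *
    (if 0 < (a(j := a j + 1)) i then v ((a(j := a j + 1))(i := (a(j := a j + 1)) i - 1), S - {j}) else 0)"
    for j
  define td where "td j = (if 0 < a i then ext_sign j S * of_nat ((a(i := a i - 1)) j + 1) *
    v ((a(i := a i - 1))(j := (a(i := a i - 1)) j + 1), S - {j}) else 0)" for j
  have dt_td: "dt j - td j = (if j = i then ext_sign i S * v (a, S - {i}) else 0)" for j
  proof (cases "j = i")
    case True
    then show ?thesis
    proof (cases "0 < a i")
      case False
      then have "a(i := 0) = a" by auto
      then show ?thesis using False \<open>j = i\<close> unfolding dt_def td_def by simp
    qed (simp add: dt_def td_def algebra_simps)
  qed (auto simp: dt_def td_def fun_upd_twist)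
  show "lapp (dr * mult_t i - mult_t i * dr) v (a, S) = lapp (mult_e i) v (a, S)"
  proof (cases "finite S")
    case True
    have "lapp (dr * mult_t i - mult_t i * dr) v (a, S) = (\<Sum>j\<in>S. dt j) - (\<Sum>j\<in>S. td j)"
      using True unfolding dt_def td_def
      by (simp add: lapp_minus lapp_times lapp_dr lapp_mult_t sum_distrib_left
          if_distrib[of "\<lambda>x. x * _"] cong: if_cong)
    also have "\<dots> = (\<Sum>j\<in>S. if j = i then ext_sign i S * v (a, S - {i}) else 0)"
      by (simp add: sum_subtractf[symmetric] dt_td)
    also have "\<dots> = lapp (mult_e i) v (a, S)" using True by (simp add: lapp_mult_e)
    finally show ?thesis .
  qed (simp add: lapp_minus lapp_times lapp_dr lapp_mult_t lapp_mult_e)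
qed

lemma dr_mult_e_anticommutator: "dr * mult_e i + mult_e i * dr = (0 :: 'k::field linop)"
proof (rule linop_eqI)
  fix v :: "'k svec" and a S
  show "lapp (dr * mult_e i + mult_e i * dr) v (a, S) = lapp 0 v (a, S)"
  proof (cases "finite S \<and> i \<in> S")
    case True
    then have fin: "finite S" and i: "i \<in> S" by auto
    define c where "c j = (of_nat (a j + 1) :: 'k)" for j
    define u where "u j = v (a(j := a j + 1), S - {i} - {j})" for j
    have "lapp (dr * mult_e i) v (a, S) =
      (\<Sum>j\<in>S. ext_sign j S * c j * (if finite (S - {j}) \<and> i \<in> S - {j}
         then ext_sign i (S - {j}) * v (a(j := a j + 1), S - {j} - {i}) else 0))"
      using fin by (simp add: lapp_times lapp_dr lapp_mult_e c_def cong del: if_weak_cong)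
    also have "\<dots> = (\<Sum>j\<in>S - {i}. ext_sign j S * c j * (if finite (S - {j}) \<and> i \<in> S - {j}
         then ext_sign i (S - {j}) * v (a(j := a j + 1), S - {j} - {i}) else 0))"
      using fin i by (simp add: sum.remove)
    also have "\<dots> = (\<Sum>j\<in>S - {i}. ext_sign j S * ext_sign i (S - {j}) * c j * u j)"
      unfolding u_def using fin i
      by (intro sum.cong) (auto simp: Diff_insert2[symmetric] insert_commute)
    also have "\<dots> = (\<Sum>j\<in>S - {i}. - (ext_sign i S * (ext_sign j (S - {i}) * c j * u j)))"
    proof (rule sum.cong)
      fix j assume "j \<in> S - {i}"
      then have "ext_sign j S * ext_sign i (S - {j}) = - (ext_sign i S * (ext_sign j (S - {i}) :: 'k))"
        using fin i by (intro ext_sign_swap) auto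
      then show "ext_sign j S * ext_sign i (S - {j}) * c j * u j =
          - (ext_sign i S * (ext_sign j (S - {i}) * c j * u j))"
        by (simp add: mult.assoc[symmetric])
    qed simp
    also have "\<dots> = - (ext_sign i S * (\<Sum>j\<in>S - {i}. ext_sign j (S - {i}) * c j * u j))"
      by (simp add: sum_distrib_left sum_negf)
    also have "ext_sign i S * (\<Sum>j\<in>S - {i}. ext_sign j (S - {i}) * c j * u j) =
        lapp (mult_e i * dr) v (a, S)"
      using fin i by (simp add: lapp_times lapp_dr lapp_mult_e u_def c_def)
    finally show ?thesis by (simp add: lapp_plus lapp_zero)
  qed (auto simp: lapp_plus lapp_times lapp_dr lapp_mult_e lapp_zero intro!: sum.neutral)
qed

section \<open>The superderivation \<open>sder\<close>\<close>

definition pconj :: "'k::field linop \<Rightarrow> 'k linop" where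
  "pconj X = parity * X * parity"

text \<open>On the multiplication operator by f, \<open>sder\<close> gives the multiplication operator by d f.\<close>

definition sder :: "'k::field linop \<Rightarrow> 'k linop" where
  "sder X = dr * X - pconj X * dr"

lemma pconj_add: "pconj (X + Y) = pconj X + pconj Y"
  unfolding pconj_def by (simp add: algebra_simps)

lemma pconj_diff: "pconj (X - Y) = pconj X - pconj Y"
  unfolding pconj_def by (simp add: algebra_simps)

lemma parity_square': "parity * (parity * X) = X"
  by (simp add: mult.assoc[symmetric] parity_square)

lemma pconj_mult: "pconj (X * Y) = pconj X * pconj Y"
  unfolding pconj_def by (simp add: mult.assoc parity_square')

lemma pconj_pconj: "pconj (pconj X) = X"
  unfolding pconj_def by (simp add: mult.assoc parity_square' parity_square)

lemma pconj_scalar: "pconj (scalar c) = scalar c"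
  unfolding pconj_def by (metis scalar_commute mult.assoc parity_square mult_1_right)

lemma pconj_mult_t: "pconj (mult_t i) = mult_t i"
  unfolding pconj_def by (simp add: parity_mult_t mult.assoc parity_square)

lemma pconj_mult_e: "pconj (mult_e i) = - mult_e i"
  unfolding pconj_def by (simp add: parity_mult_e mult.assoc parity_square)

lemma pconj_dr: "pconj dr = - dr"
  unfolding pconj_def by (simp add: parity_dr mult.assoc parity_square)

lemma sder_add: "sder (X + Y) = sder X + sder Y"
  unfolding sder_def by (simp add: pconj_add algebra_simps)

lemma sder_zero: "sder 0 = 0"
  using sder_add[of 0 0] by simp

lemma sder_mult: "sder (X * Y) = sder X * Y + pconj X * sder Y"
  unfolding sder_def by (simp add: pconj_mult algebra_simps)

lemma sder_pconj: "sder (pconj X) = - pconj (sder X)"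
  unfolding sder_def by (simp add: pconj_diff pconj_mult pconj_pconj pconj_dr algebra_simps)

lemma sder_scalar: "sder (scalar c) = 0"
  unfolding sder_def by (simp add: pconj_scalar scalar_commute)

lemma sder_scalar_mult: "sder (scalar c * X) = scalar c * sder X"
  by (simp add: sder_mult sder_scalar pconj_scalar)

lemma sder_mult_t: "sder (mult_t i) = mult_e i"
  unfolding sder_def pconj_mult_t by (rule dr_mult_t_commutator)

lemma sder_mult_e: "sder (mult_e i) = 0"
  unfolding sder_def pconj_mult_e using dr_mult_e_anticommutator[of i] by simp

section \<open>Even and odd elements of the supercommutative algebra\<close>

inductive_set Even :: "'k::field linop set" and Odd :: "'k linop set" where
  Even_scalar: "scalar c \<in> Even"
| Even_mult_t: "mult_t i \<in> Even"
| Odd_mult_e: "mult_e i \<in> Odd"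
| Even_add: "a \<in> Even \<Longrightarrow> b \<in> Even \<Longrightarrow> a + b \<in> Even"
| Odd_add: "a \<in> Odd \<Longrightarrow> b \<in> Odd \<Longrightarrow> a + b \<in> Odd"
| Even_mult: "a \<in> Even \<Longrightarrow> b \<in> Even \<Longrightarrow> a * b \<in> Even"
| Even_mult_Odd: "a \<in> Odd \<Longrightarrow> b \<in> Odd \<Longrightarrow> a * b \<in> Even"
| Odd_mult_Even_Odd: "a \<in> Even \<Longrightarrow> b \<in> Odd \<Longrightarrow> a * b \<in> Odd"
| Odd_mult_Odd_Even: "a \<in> Odd \<Longrightarrow> b \<in> Even \<Longrightarrow> a * b \<in> Odd"

lemma Even_zero: "0 \<in> Even"
  using Even_scalar[of 0] by (simp add: scalar_zero)

lemma Even_one: "1 \<in> Even"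
  using Even_scalar[of 1] by (simp add: scalar_one)

lemma Odd_zero: "0 \<in> Odd"
  using Odd_mult_Even_Odd[OF Even_zero Odd_mult_e] by simp

lemma Even_diff: "a \<in> Even \<Longrightarrow> b \<in> Even \<Longrightarrow> a - b \<in> Even"
  using Even_add[OF _ Even_mult[OF Even_scalar[of "-1"]], of a b] by (simp add: scalar_minus_one)

lemma Odd_diff: "a \<in> Odd \<Longrightarrow> b \<in> Odd \<Longrightarrow> a - b \<in> Odd"
  using Odd_add[OF _ Odd_mult_Even_Odd[OF Even_scalar[of "-1"]], of a b] by (simp add: scalar_minus_one)

lemma Even_power: "a \<in> Even \<Longrightarrow> a ^ n \<in> Even"
  by (induction n) (auto intro: Even_one Even_mult)

lemma commute_mult: "y * a = a * y \<Longrightarrow> y * b = b * y \<Longrightarrow> y * (a * b) = (a * b) * (y::'a::ring)"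
  by (simp add: mult.assoc flip: mult.assoc[of y])

lemma commute_anticommute_mult:
  "y * a = a * y \<Longrightarrow> y * b = - (b * y) \<Longrightarrow> y * (a * b) = - ((a * b) * (y::'a::ring))"
  by (simp add: mult.assoc flip: mult.assoc[of y])

lemma anticommute_commute_mult:
  "y * a = - (a * y) \<Longrightarrow> y * b = b * y \<Longrightarrow> y * (a * b) = - ((a * b) * (y::'a::ring))"
  by (simp add: mult.assoc flip: mult.assoc[of y])

lemma anticommute_mult:
  "y * a = - (a * y) \<Longrightarrow> y * b = - (b * y) \<Longrightarrow> y * (a * b) = (a * b) * (y::'a::ring)"
  by (simp add: mult.assoc flip: mult.assoc[of y])

lemma commute_add: "y * a = a * y \<Longrightarrow> y * b = b * y \<Longrightarrow> y * (a + b) = (a + b) * (y::'a::ring)"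
  by (simp add: algebra_simps)

lemma anticommute_add:
  "y * a = - (a * y) \<Longrightarrow> y * b = - (b * y) \<Longrightarrow> y * (a + b) = - ((a + b) * (y::'a::ring))"
  by (simp add: algebra_simps)

lemma mult_t_commute_Even_Odd:
  "(x::'k::field linop) \<in> Even \<Longrightarrow> mult_t i * x = x * mult_t i"
  "(z::'k linop) \<in> Odd \<Longrightarrow> mult_t i * z = z * mult_t i"
proof (induction x and z rule: Even_Odd.inducts)
  case (Even_add a b) show ?case using Even_add.IH by (rule commute_add)
next case (Odd_add a b) show ?case using Odd_add.IH by (rule commute_add)
next case (Even_mult a b) show ?case using Even_mult.IH by (rule commute_mult)
next case (Even_mult_Odd a b) show ?case using Even_mult_Odd.IH by (rule commute_mult)
next case (Odd_mult_Even_Odd a b) show ?case using Odd_mult_Even_Odd.IH by (rule commute_mult)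
next case (Odd_mult_Odd_Even a b) show ?case using Odd_mult_Odd_Even.IH by (rule commute_mult)
qed (simp_all add: scalar_commute mult_t_commute mult_t_mult_e_commute)

lemma mult_e_supercommute_Even_Odd:
  "(x::'k::field linop) \<in> Even \<Longrightarrow> mult_e i * x = x * mult_e i"
  "(z::'k linop) \<in> Odd \<Longrightarrow> mult_e i * z = - (z * mult_e i)"
proof (induction x and z rule: Even_Odd.inducts)
  case (Even_add a b) show ?case using Even_add.IH by (rule commute_add)
next case (Odd_add a b) show ?case using Odd_add.IH by (rule anticommute_add)
next case (Even_mult a b) show ?case using Even_mult.IH by (rule commute_mult)
next case (Even_mult_Odd a b) show ?case using Even_mult_Odd.IH by (rule anticommute_mult)
next case (Odd_mult_Even_Odd a b) show ?case using Odd_mult_Even_Odd.IH by (rule commute_anticommute_mult)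
next case (Odd_mult_Odd_Even a b) show ?case using Odd_mult_Odd_Even.IH by (rule anticommute_commute_mult)
next case (Odd_mult_e j) show ?case by (rule mult_e_anticommute)
qed (simp_all add: scalar_commute mult_t_mult_e_commute)

lemma Even_commute:
  assumes "(y::'k::field linop) \<in> Even"
  shows "(x::'k linop) \<in> Even \<Longrightarrow> y * x = x * y" and "(z::'k linop) \<in> Odd \<Longrightarrow> y * z = z * y"
proof (induction x and z rule: Even_Odd.inducts)
  case (Even_add a b) show ?case using Even_add.IH by (rule commute_add)
next case (Odd_add a b) show ?case using Odd_add.IH by (rule commute_add)
next case (Even_mult a b) show ?case using Even_mult.IH by (rule commute_mult)
next case (Even_mult_Odd a b) show ?case using Even_mult_Odd.IH by (rule commute_mult)
next case (Odd_mult_Even_Odd a b) show ?case using Odd_mult_Even_Odd.IH by (rule commute_mult)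
next case (Odd_mult_Odd_Even a b) show ?case using Odd_mult_Odd_Even.IH by (rule commute_mult)
qed (simp_all add: scalar_commute mult_t_commute_Even_Odd(1)[OF assms]
      mult_e_supercommute_Even_Odd(1)[OF assms])

lemma Odd_supercommute:
  assumes "(y::'k::field linop) \<in> Odd"
  shows "(x::'k linop) \<in> Even \<Longrightarrow> y * x = x * y" and "(z::'k linop) \<in> Odd \<Longrightarrow> y * z = - (z * y)"
proof (induction x and z rule: Even_Odd.inducts)
  case (Even_add a b) show ?case using Even_add.IH by (rule commute_add)
next case (Odd_add a b) show ?case using Odd_add.IH by (rule anticommute_add)
next case (Even_mult a b) show ?case using Even_mult.IH by (rule commute_mult)
next case (Even_mult_Odd a b) show ?case using Even_mult_Odd.IH by (rule anticommute_mult)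
next case (Odd_mult_Even_Odd a b) show ?case using Odd_mult_Even_Odd.IH by (rule commute_anticommute_mult)
next case (Odd_mult_Odd_Even a b) show ?case using Odd_mult_Odd_Even.IH by (rule anticommute_commute_mult)
qed (use mult_t_commute_Even_Odd(2)[OF assms] mult_e_supercommute_Even_Odd(2)[OF assms] in
      \<open>simp_all add: scalar_commute\<close>)

lemma Even_commute_Even: "a \<in> Even \<Longrightarrow> y \<in> Even \<Longrightarrow> a * y = y * a"
  using Even_commute(1) by blast

lemma Even_commute_Odd: "a \<in> Even \<Longrightarrow> y \<in> Odd \<Longrightarrow> a * y = y * a"
  using Even_commute(2) by blast

lemma Odd_anticommute_Odd: "a \<in> Odd \<Longrightarrow> y \<in> Odd \<Longrightarrow> a * y = - (y * a)"
  using Odd_supercommute(2) by blast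

lemma Odd_square:
  assumes "(2::'k::field) \<noteq> 0" and "a \<in> (Odd :: 'k linop set)"
  shows "a * a = 0"
proof (rule linop_double_eq_0[OF assms(1)])
  show "a * a + a * a = 0"
    using Odd_anticommute_Odd[OF assms(2) assms(2)] by (metis neg_eq_iff_add_eq_0)
qed

lemma pconj_Even_Odd:
  "(x::'k::field linop) \<in> Even \<Longrightarrow> pconj x = x"
  "(z::'k linop) \<in> Odd \<Longrightarrow> pconj z = - z"
  by (induction x and z rule: Even_Odd.inducts)
    (simp_all add: pconj_scalar pconj_mult_t pconj_mult_e pconj_add pconj_mult)

lemma sder_Even_Odd:
  "(x::'k::field linop) \<in> Even \<Longrightarrow> sder x \<in> Odd"
  "(z::'k linop) \<in> Odd \<Longrightarrow> sder z \<in> Even"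
proof (induction x and z rule: Even_Odd.inducts)
  case (Even_scalar c) show ?case by (simp add: sder_scalar Odd_zero)
next case (Even_mult_t j) show ?case by (simp add: sder_mult_t Odd_mult_e)
next case (Odd_mult_e j) show ?case by (simp add: sder_mult_e Even_zero)
next case (Even_add a b) then show ?case by (simp add: sder_add Odd_add)
next case (Odd_add a b) then show ?case by (simp add: sder_add Even_add)
next case (Even_mult a b) then show ?case
    by (simp add: sder_mult pconj_Even_Odd Odd_add Odd_mult_Even_Odd Odd_mult_Odd_Even)
next case (Even_mult_Odd a b) then show ?case
    by (simp add: sder_mult pconj_Even_Odd Odd_diff Odd_mult_Even_Odd Odd_mult_Odd_Even)
next case (Odd_mult_Even_Odd a b) then show ?case
    by (simp add: sder_mult pconj_Even_Odd Even_add Even_mult Even_mult_Odd)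
next case (Odd_mult_Odd_Even a b) then show ?case
    by (simp add: sder_mult pconj_Even_Odd Even_diff Even_mult Even_mult_Odd)
qed

lemma sder_sder_Even_Odd:
  "(x::'k::field linop) \<in> Even \<Longrightarrow> sder (sder x) = 0"
  "(z::'k linop) \<in> Odd \<Longrightarrow> sder (sder z) = 0"
  by (induction x and z rule: Even_Odd.inducts)
    (simp_all add: sder_scalar sder_mult_t sder_mult_e sder_zero sder_add sder_mult sder_pconj
      pconj_pconj)

inductive_set Poly_t :: "'k::field linop set" where
  Poly_t_scalar: "scalar c \<in> Poly_t"
| Poly_t_mult_t: "mult_t i \<in> Poly_t"
| Poly_t_add: "a \<in> Poly_t \<Longrightarrow> b \<in> Poly_t \<Longrightarrow> a + b \<in> Poly_t"
| Poly_t_mult: "a \<in> Poly_t \<Longrightarrow> b \<in> Poly_t \<Longrightarrow> a * b \<in> Poly_t"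

lemma Poly_t_Even: "x \<in> Poly_t \<Longrightarrow> x \<in> Even"
  by (induction rule: Poly_t.induct) (auto intro: Even_Odd.intros)

lemma Poly_t_power: "a \<in> Poly_t \<Longrightarrow> a ^ n \<in> Poly_t"
  by (induction n) (auto intro: Poly_t_mult Poly_t_scalar[of 1, simplified scalar_one])

section \<open>Exterior degree\<close>

definition ext_part :: "nat \<Rightarrow> 'k::field svec \<Rightarrow> 'k svec" where
  "ext_part s v = (\<lambda>(a, S). if card S = s then v (a, S) else 0)"

text \<open>X raises the exterior degree by q. This is stated pointwise since a coefficient function is
  not a finite sum of its homogeneous parts.\<close>

definition ext_homog :: "nat \<Rightarrow> 'k::field linop \<Rightarrow> bool" where
  "ext_homog q X \<longleftrightarrow> (\<forall>v a S. lapp X v (a, S) =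
     (if q \<le> card S then lapp X (ext_part (card S - q) v) (a, S) else 0))"

lemma ext_homogD:
  "ext_homog q X \<Longrightarrow>
     lapp X v (a, S) = (if q \<le> card S then lapp X (ext_part (card S - q) v) (a, S) else 0)"
  unfolding ext_homog_def by blast

lemma ext_part_ext_part: "ext_part s (ext_part t v) = (if s = t then ext_part t v else (\<lambda>b. 0))"
  by (auto simp: ext_part_def fun_eq_iff)

lemma ext_homog_ext_part_support:
  assumes "ext_homog r Y" and "card S \<noteq> t + r"
  shows "lapp Y (ext_part t v) (a, S) = 0"
proof -
  have "\<not> r \<le> card S \<or> card S - r \<noteq> t" using assms(2) by auto
  then show ?thesis
    using ext_homogD[OF assms(1), of "ext_part t v" a S]
    by (auto simp: ext_part_ext_part lapp_zero_vec)
qed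

lemma ext_part_lapp:
  assumes "ext_homog r Y"
  shows "ext_part s (lapp Y v) = (if r \<le> s then lapp Y (ext_part (s - r) v) else (\<lambda>b. 0))"
proof (rule ext, clarify)
  fix a S
  have Y: "lapp Y v (a, S) = (if r \<le> card S then lapp Y (ext_part (card S - r) v) (a, S) else 0)"
    using ext_homogD[OF assms] .
  show "ext_part s (lapp Y v) (a, S) = (if r \<le> s then lapp Y (ext_part (s - r) v) else (\<lambda>b. 0)) (a, S)"
  proof (cases "card S = s")
    case True
    then show ?thesis using Y by (simp add: ext_part_def)
  next
    case False
    then have "r \<le> s \<Longrightarrow> lapp Y (ext_part (s - r) v) (a, S) = 0"
      using ext_homog_ext_part_support[OF assms] by simp
    then show ?thesis using False by (simp add: ext_part_def)
  qed
qed

lemma ext_homog_mult: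
  assumes "ext_homog q X" "ext_homog r Y"
  shows "ext_homog (q + r) (X * Y)"
  unfolding ext_homog_def
proof (intro allI)
  fix v a S
  have "lapp (X * Y) v (a, S) =
      (if q \<le> card S then lapp X (ext_part (card S - q) (lapp Y v)) (a, S) else 0)"
    using ext_homogD[OF assms(1)] by (simp add: lapp_times)
  also have "\<dots> = (if q + r \<le> card S then lapp X (lapp Y (ext_part (card S - (q + r)) v)) (a, S) else 0)"
    by (auto simp: ext_part_lapp[OF assms(2)] lapp_zero_vec diff_diff_add)
  finally show "lapp (X * Y) v (a, S) =
      (if q + r \<le> card S then lapp (X * Y) (ext_part (card S - (q + r)) v) (a, S) else 0)"
    by (simp add: lapp_times)
qed

lemma ext_homog_add:
  assumes "ext_homog q X" "ext_homog q Y"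
  shows "ext_homog q (X + Y)"
  unfolding ext_homog_def
proof (intro allI)
  fix v a S
  show "lapp (X + Y) v (a, S) =
      (if q \<le> card S then lapp (X + Y) (ext_part (card S - q) v) (a, S) else 0)"
    unfolding lapp_plus ext_homogD[OF assms(1), of v] ext_homogD[OF assms(2), of v] by simp
qed

lemma ext_homog_zero: "ext_homog q 0"
  unfolding ext_homog_def by (simp add: lapp_zero)

lemma ext_homog_scalar: "ext_homog 0 (scalar c)"
  unfolding ext_homog_def by (simp add: lapp_scalar ext_part_def)

lemma ext_homog_mult_t: "ext_homog 0 (mult_t i)"
  unfolding ext_homog_def by (simp add: lapp_mult_t ext_part_def)

lemma ext_homog_mult_e: "ext_homog 1 (mult_e i)"
  unfolding ext_homog_def
  by (auto simp: lapp_mult_e ext_part_def Suc_le_eq card_gt_0_iff)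

lemma Poly_t_ext_homog: "x \<in> Poly_t \<Longrightarrow> ext_homog 0 x"
  by (induction rule: Poly_t.induct)
    (auto intro: ext_homog_scalar ext_homog_mult_t ext_homog_add ext_homog_mult[of 0 _ 0, simplified])

lemma sder_Poly_t_ext_homog: "x \<in> Poly_t \<Longrightarrow> ext_homog 1 (sder x)"
proof (induction rule: Poly_t.induct)
  case (Poly_t_scalar c) show ?case by (simp add: sder_scalar ext_homog_zero)
next
  case (Poly_t_mult_t i) show ?case unfolding sder_mult_t by (rule ext_homog_mult_e)
next
  case (Poly_t_add a b) then show ?case by (simp add: sder_add ext_homog_add)
next
  case (Poly_t_mult a b)
  have "pconj a = a" using Poly_t_mult Poly_t_Even pconj_Even_Odd(1) by blast
  moreover have "ext_homog (1 + 0) (sder a * b)"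
    using Poly_t_mult Poly_t_ext_homog by (intro ext_homog_mult) auto
  moreover have "ext_homog (0 + 1) (a * sder b)"
    using Poly_t_mult Poly_t_ext_homog by (intro ext_homog_mult) auto
  ultimately show ?case by (simp add: sder_mult ext_homog_add)
qed

text \<open>The coefficient function of 1 \<in> A.\<close>

definition vacuum :: "'k::field svec" where
  "vacuum = (\<lambda>b. if b = ((\<lambda>_. 0), {}) then 1 else 0)"

lemma ext_homog_vacuum:
  fixes X :: "'k::field linop"
  assumes "ext_homog q X" "q \<noteq> card S"
  shows "lapp X vacuum (a, S) = 0"
proof (cases "q \<le> card S")
  case True
  then have "ext_part (card S - q) (vacuum :: 'k svec) = (\<lambda>b. 0)"
    using assms(2) by (auto simp: ext_part_def vacuum_def fun_eq_iff)
  then show ?thesis using ext_homogD[OF assms(1), of vacuum a S] True by (simp add: lapp_zero_vec)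
qed (use ext_homogD[OF assms(1), of vacuum a S] in simp)

lemma dr_vacuum: "lapp dr (vacuum :: 'k::field svec) = (\<lambda>b. 0)"
proof (rule ext, clarify)
  fix a :: "nat \<Rightarrow> nat" and S :: "nat set"
  have "a(j := a j + 1) \<noteq> (\<lambda>_. 0)" for j
    by (metis fun_upd_same zero_neq_one add_eq_0_iff_both_eq_0)
  then show "lapp dr vacuum (a, S) = 0" by (simp add: lapp_dr vacuum_def)
qed

lemma sder_vacuum:
  assumes "finite S" "\<forall>i\<in>S. of_nat (a i + 1) = (0::'k::field)"
  shows "lapp (sder (Y :: 'k linop)) vacuum (a, S) = 0"
  using assms by (auto simp: sder_def lapp_minus lapp_times dr_vacuum lapp_zero_vec lapp_dr
      intro!: sum.neutral)

section \<open>The forms \<omega>(a) = a^(p-1) d a\<close>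

lemma power_add_square_zero:
  fixes b m :: "'a::ring_1"
  assumes "b * m = m * b" and "m * m = 0"
  shows "(b + m) ^ Suc k = b ^ Suc k + of_nat (Suc k) * b ^ k * m"
proof (induction k)
  case (Suc k)
  have "(b + m) ^ Suc (Suc k) = (b ^ Suc k + of_nat (Suc k) * b ^ k * m) * (b + m)"
    by (simp only: power_Suc2[of "b + m" "Suc k"] Suc)
  also have "\<dots> = b ^ Suc k * b + of_nat (Suc k) * b ^ k * (m * b) + b ^ Suc k * m
      + of_nat (Suc k) * b ^ k * (m * m)"
    by (simp only: distrib_left distrib_right mult.assoc add.assoc)
  also have "\<dots> = b ^ Suc (Suc k) + of_nat (Suc k) * b ^ Suc k * m + b ^ Suc k * m"
    by (simp only: assms(2) assms(1)[symmetric] mult_zero_right add_0_right power_Suc2 mult.assoc)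
  also have "\<dots> = b ^ Suc (Suc k) + of_nat (Suc (Suc k)) * b ^ Suc k * m"
    by (simp add: algebra_simps)
  finally show ?case .
qed simp

lemma sder_power:
  assumes "x \<in> Even"
  shows "sder (x ^ Suc k) = of_nat (Suc k) * x ^ k * sder x"
proof (induction k)
  case (Suc k)
  have "sder (x ^ Suc (Suc k)) = sder x * x ^ Suc k + x * sder (x ^ Suc k)"
    unfolding power_Suc[of x "Suc k"] by (simp only: sder_mult pconj_Even_Odd(1)[OF assms])
  also have "sder x * x ^ Suc k = x ^ Suc k * sder x"
    by (rule sym[OF Even_commute_Odd[OF Even_power[OF assms] sder_Even_Odd(1)[OF assms]]])
  also have "x * sder (x ^ Suc k) = of_nat (Suc k) * (x * x ^ k) * sder x"
    by (simp only: Suc mult.assoc[symmetric] mult_of_nat_commute[of "Suc k" x])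
  finally show ?case by (simp add: algebra_simps)
qed simp

lemma square_zero_mult_sder:
  assumes "(2::'k::field) \<noteq> 0" "m \<in> (Even :: 'k linop set)" "m * m = 0"
  shows "m * sder m = 0"
proof (rule linop_double_eq_0[OF assms(1)])
  have "0 = sder (m * m)" by (simp add: assms(3) sder_zero)
  also have "\<dots> = sder m * m + m * sder m" by (simp add: sder_mult pconj_Even_Odd(1)[OF assms(2)])
  also have "sder m * m = m * sder m"
    using Even_commute_Odd[OF assms(2) sder_Even_Odd(1)[OF assms(2)]] by simp
  finally show "m * sder m + m * sder m = 0" by simp
qed

definition omega :: "nat \<Rightarrow> 'k::field linop \<Rightarrow> 'k linop" where
  "omega p a = a ^ (p - 1) * sder a"

lemma omega_add_square_zero:
  assumes two: "(2::'k::field) \<noteq> 0" and p: "2 \<le> p"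
    and b: "b \<in> (Even :: 'k linop set)" and m: "m \<in> Even" "m * m = 0"
  shows "omega p (b + m) = omega p b + sder (b ^ (p - 1) * m)"
proof -
  obtain k where k: "p - 1 = Suc k" using p by (intro that[of "p - 2"]) simp
  have Db: "sder b \<in> Odd" using sder_Even_Odd(1)[OF b] .
  have "omega p (b + m) = (b ^ Suc k + of_nat (Suc k) * b ^ k * m) * (sder b + sder m)"
    unfolding omega_def k power_add_square_zero[OF Even_commute_Even[OF b m(1)] m(2)] sder_add ..
  also have "\<dots> = b ^ Suc k * sder b + b ^ Suc k * sder m + of_nat (Suc k) * b ^ k * (m * sder b)
      + of_nat (Suc k) * b ^ k * (m * sder m)"
    by (simp add: algebra_simps)
  also have "\<dots> = b ^ Suc k * sder b + (b ^ Suc k * sder m + of_nat (Suc k) * b ^ k * sder b * m)"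
    by (simp add: square_zero_mult_sder[OF two m] Even_commute_Odd[OF m(1) Db] mult.assoc)
  also have "b ^ Suc k * sder m + of_nat (Suc k) * b ^ k * sder b * m = sder (b ^ Suc k * m)"
    unfolding sder_mult sder_power[OF b] pconj_Even_Odd(1)[OF Even_power[OF b]] by (rule add.commute)
  finally show ?thesis unfolding omega_def k .
qed

definition square_zero_Even :: "'k::field linop set" where
  "square_zero_Even = {m \<in> Even. m * m = 0}"

lemma square_zero_Even_mult:
  assumes "m \<in> square_zero_Even" "c \<in> Even"
  shows "m * c \<in> square_zero_Even" "c * m \<in> square_zero_Even"
proof -
  have m: "m \<in> Even" "m * m = 0" using assms(1) by (auto simp: square_zero_Even_def)
  have "m * c = c * m" using Even_commute_Even[OF m(1) assms(2)] .
  moreover have "(m * c) * (m * c) = (m * m) * (c * c)"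
    using \<open>m * c = c * m\<close> by (metis mult.assoc)
  ultimately show "m * c \<in> square_zero_Even" "c * m \<in> square_zero_Even"
    using m assms(2) by (auto simp: square_zero_Even_def intro: Even_mult)
qed

lemma Odd_mult_Odd_square_zero:
  assumes "(2::'k::field) \<noteq> 0" "a \<in> (Odd :: 'k linop set)" "b \<in> Odd"
  shows "a * b \<in> square_zero_Even"
proof -
  have "(a * b) * (a * b) = - ((a * a) * (b * b))"
    using Odd_anticommute_Odd[OF assms(3,2)] by (simp add: mult.assoc) (simp flip: mult.assoc)
  then show ?thesis
    using Odd_square[OF assms(1,2)] assms(2,3) by (simp add: square_zero_Even_def Even_mult_Odd)
qed

lemma omega_add_sum_list:
  assumes two: "(2::'k::field) \<noteq> 0" and p: "2 \<le> p"
  shows "set ms \<subseteq> square_zero_Even \<Longrightarrow> b \<in> (Even :: 'k linop set) \<Longrightarrow>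
    \<exists>Y. omega p (b + sum_list ms) = omega p b + sder Y"
proof (induction ms arbitrary: b)
  case Nil
  show ?case by (rule exI[of _ 0]) (simp add: sder_zero)
next
  case (Cons m ms)
  then have m: "m \<in> Even" "m * m = 0" and "b + m \<in> Even"
    by (auto simp: square_zero_Even_def intro: Even_add)
  with Cons obtain Y where Y: "omega p (b + m + sum_list ms) = omega p (b + m) + sder Y"
    by auto
  have "omega p (b + sum_list (m # ms)) = omega p (b + m + sum_list ms)" by (simp add: add.assoc)
  also have "\<dots> = omega p b + sder (b ^ (p - 1) * m + Y)"
    using Y omega_add_square_zero[OF two p Cons.prems(2) m] by (simp add: sder_add add.assoc)
  finally show ?case by blast
qed

text \<open>The statement about odd elements is a dummy required by the mutual induction.\<close>

lemma Even_decompose: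
  assumes two: "(2::'k::field) \<noteq> 0"
  shows "(x::'k linop) \<in> Even \<Longrightarrow>
      \<exists>x0 ms. x0 \<in> Poly_t \<and> set ms \<subseteq> square_zero_Even \<and> x = x0 + sum_list ms"
    and "(z::'k linop) \<in> Odd \<Longrightarrow> True"
proof (induction x and z rule: Even_Odd.inducts)
  case (Even_scalar c)
  show ?case by (rule exI[of _ "scalar c"], rule exI[of _ "[]"]) (simp add: Poly_t_scalar)
next
  case (Even_mult_t i)
  show ?case by (rule exI[of _ "mult_t i"], rule exI[of _ "[]"]) (simp add: Poly_t_mult_t)
next
  case (Even_add a b)
  then obtain a0 ms b0 ns where
    "a0 \<in> Poly_t" "set ms \<subseteq> square_zero_Even" "a = a0 + sum_list ms"
    "b0 \<in> Poly_t" "set ns \<subseteq> square_zero_Even" "b = b0 + sum_list ns"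
    by blast
  then show ?case
    by (intro exI[of _ "a0 + b0"] exI[of _ "ms @ ns"]) (auto intro: Poly_t_add simp: algebra_simps)
next
  case (Even_mult a b)
  then obtain a0 ms b0 ns where
    A: "a0 \<in> Poly_t" "set ms \<subseteq> square_zero_Even" "a = a0 + sum_list ms" and
    B: "b0 \<in> Poly_t" "set ns \<subseteq> square_zero_Even" "b = b0 + sum_list ns"
    by blast
  have "a * b = a0 * b + sum_list ms * b" by (simp add: A(3) distrib_right)
  also have "a0 * b = a0 * b0 + a0 * sum_list ns" by (simp add: B(3) distrib_left)
  finally have "a * b = a0 * b0 + sum_list (map (\<lambda>n. a0 * n) ns @ map (\<lambda>m. m * b) ms)"
    by (simp add: sum_list_const_mult sum_list_mult_const add.assoc)
  moreover have "set (map (\<lambda>n. a0 * n) ns @ map (\<lambda>m. m * b) ms) \<subseteq> square_zero_Even"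
    using A(2) B(2) square_zero_Even_mult[OF _ Poly_t_Even[OF A(1)]]
      square_zero_Even_mult[OF _ Even_mult.hyps(2)]
    by auto
  ultimately show ?case using A(1) B(1) by (blast intro: Poly_t_mult)
next
  case (Even_mult_Odd a b)
  then show ?case
    using Odd_mult_Odd_square_zero[OF two]
    by (intro exI[of _ 0] exI[of _ "[a * b]"]) (simp add: Poly_t_scalar[of 0, simplified scalar_zero])
qed simp_all

definition cohom_homog :: "nat \<Rightarrow> 'k::field linop \<Rightarrow> bool" where
  "cohom_homog q X \<longleftrightarrow> sder X = 0 \<and> (\<exists>Z Y. X = Z + sder Y \<and> ext_homog q Z \<and> sder Z = 0)"

lemma cohom_homog_mult:
  assumes "cohom_homog q X" "cohom_homog r X'"
  shows "cohom_homog (q + r) (X * X')"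
proof -
  obtain Z Y where X: "X = Z + sder Y" "ext_homog q Z" "sder Z = 0" and "sder X = 0"
    using assms(1) unfolding cohom_homog_def by blast
  obtain Z' Y' where X': "X' = Z' + sder Y'" "ext_homog r Z'" "sder Z' = 0" and "sder X' = 0"
    using assms(2) unfolding cohom_homog_def by blast
  have "sder (pconj Z) = 0" using sder_pconj[of Z] by (simp add: X(3) pconj_def)
  then have "X * X' = Z * Z' + sder (pconj Z * Y' + Y * X')"
    using X X' \<open>sder X' = 0\<close> by (simp add: sder_add sder_mult pconj_pconj algebra_simps)
  moreover have "sder (X * X') = 0" "sder (Z * Z') = 0"
    using X X' \<open>sder X = 0\<close> \<open>sder X' = 0\<close> by (simp_all add: sder_mult)
  ultimately show ?thesis unfolding cohom_homog_def using ext_homog_mult[OF X(2) X'(2)] by blast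
qed

lemma cohom_homog_scalar: "cohom_homog 0 (scalar c)"
  unfolding cohom_homog_def
  by (intro conjI exI[of _ "scalar c"] exI[of _ 0]) (simp_all add: sder_scalar sder_zero ext_homog_scalar)

lemma cohom_homog_prod_list: "\<forall>x\<in>set xs. cohom_homog 2 x \<Longrightarrow> cohom_homog (2 * length xs) (prod_list xs)"
  by (induction xs) (auto simp: scalar_one dest: cohom_homog_mult intro: cohom_homog_scalar[of 1, simplified])

lemma sder_omega:
  assumes "(2::'k::field) \<noteq> 0" "2 \<le> p" "a \<in> (Even :: 'k linop set)"
  shows "sder (omega p a) = 0"
proof -
  obtain k where k: "p - 1 = Suc k" using assms(2) by (intro that[of "p - 2"]) simp
  have "sder (omega p a) = sder (a ^ Suc k) * sder a + pconj (a ^ Suc k) * sder (sder a)"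
    unfolding omega_def k by (rule sder_mult)
  also have "\<dots> = of_nat (Suc k) * a ^ k * (sder a * sder a)"
    unfolding sder_power[OF assms(3)] sder_sder_Even_Odd(1)[OF assms(3)] by (simp add: mult.assoc)
  finally show ?thesis using Odd_square[OF assms(1) sder_Even_Odd(1)[OF assms(3)]] by simp
qed

lemma cohom_homog_omega:
  assumes two: "(2::'k::field) \<noteq> 0" and p: "2 \<le> p" and a: "a \<in> (Even :: 'k linop set)"
  shows "cohom_homog 1 (omega p a)"
proof -
  obtain a0 ms where a0: "a0 \<in> Poly_t" "set ms \<subseteq> square_zero_Even" "a = a0 + sum_list ms"
    using Even_decompose(1)[OF two a] by blast
  obtain Y where "omega p a = omega p a0 + sder Y"
    using omega_add_sum_list[OF two p a0(2) Poly_t_Even[OF a0(1)]] a0(3) by auto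
  moreover have "ext_homog (0 + 1) (omega p a0)"
    unfolding omega_def by (intro ext_homog_mult Poly_t_ext_homog Poly_t_power a0(1) sder_Poly_t_ext_homog)
  ultimately show ?thesis
    unfolding cohom_homog_def using sder_omega[OF two p a] sder_omega[OF two p Poly_t_Even[OF a0(1)]]
    by auto
qed

section \<open>Evaluating free algebra elements at operators\<close>

definition fa_supp :: "'k::field fa \<Rightarrow> nat list set" where
  "fa_supp f = {w. f w \<noteq> 0}"

definition eval_op :: "(nat \<Rightarrow> 'k::field linop) \<Rightarrow> 'k fa \<Rightarrow> 'k linop" where
  "eval_op h f = (\<Sum>w\<in>fa_supp f. scalar (f w) * prod_list (map h w))"

lemma fa_carrier_iff: "f \<in> fa_carrier \<longleftrightarrow> finite (fa_supp f)"
  by (simp add: fa_carrier_def fa_supp_def)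

lemma eval_op_superset:
  assumes "finite A" "fa_supp f \<subseteq> A"
  shows "eval_op h f = (\<Sum>w\<in>A. scalar (f w) * prod_list (map h w))"
  unfolding eval_op_def
  by (rule sum.mono_neutral_left[OF assms]) (auto simp: fa_supp_def scalar_zero)

lemma fa_supp_add: "fa_supp (fa_add f g) \<subseteq> fa_supp f \<union> fa_supp g"
  by (auto simp: fa_supp_def fa_add_def)

lemma fa_supp_sub: "fa_supp (fa_sub f g) \<subseteq> fa_supp f \<union> fa_supp g"
  by (auto simp: fa_supp_def fa_sub_def)

lemma fa_supp_smult: "fa_supp (fa_smult c f) \<subseteq> fa_supp f"
  by (auto simp: fa_supp_def fa_smult_def)

lemma fa_supp_mult: "fa_supp (fa_mult f g) \<subseteq> (\<lambda>(u, v). u @ v) ` (fa_supp f \<times> fa_supp g)"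
proof
  fix w assume "w \<in> fa_supp (fa_mult f g)"
  then have "(\<Sum>i\<le>length w. f (take i w) * g (drop i w)) \<noteq> 0"
    by (simp add: fa_supp_def fa_mult_def)
  then obtain i where "f (take i w) * g (drop i w) \<noteq> 0"
    by (metis (no_types, lifting) sum.neutral)
  then have "(take i w, drop i w) \<in> fa_supp f \<times> fa_supp g" by (simp add: fa_supp_def)
  then show "w \<in> (\<lambda>(u, v). u @ v) ` (fa_supp f \<times> fa_supp g)"
    by (metis (no_types, lifting) append_take_drop_id case_prod_conv image_eqI)
qed

lemma fa_supp_one: "fa_supp fa_one = {[]}"
  by (auto simp: fa_supp_def fa_one_def)

lemma fa_supp_var: "fa_supp (fa_var i) = {[i]}"
  by (auto simp: fa_supp_def fa_var_def)

lemma fa_supp_zero: "fa_supp fa_zero = {}"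
  by (auto simp: fa_supp_def fa_zero_def)

lemma fa_carrier_add: "f \<in> fa_carrier \<Longrightarrow> g \<in> fa_carrier \<Longrightarrow> fa_add f g \<in> fa_carrier"
  unfolding fa_carrier_iff by (rule finite_subset[OF fa_supp_add]) simp

lemma fa_carrier_sub: "f \<in> fa_carrier \<Longrightarrow> g \<in> fa_carrier \<Longrightarrow> fa_sub f g \<in> fa_carrier"
  unfolding fa_carrier_iff by (rule finite_subset[OF fa_supp_sub]) simp

lemma fa_carrier_smult: "f \<in> fa_carrier \<Longrightarrow> fa_smult c f \<in> fa_carrier"
  unfolding fa_carrier_iff by (rule finite_subset[OF fa_supp_smult])

lemma fa_carrier_mult: "f \<in> fa_carrier \<Longrightarrow> g \<in> fa_carrier \<Longrightarrow> fa_mult f g \<in> fa_carrier"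
  unfolding fa_carrier_iff by (rule finite_subset[OF fa_supp_mult]) simp

lemma fa_carrier_one: "fa_one \<in> fa_carrier"
  by (simp add: fa_carrier_iff fa_supp_one)

lemma fa_carrier_var: "fa_var i \<in> fa_carrier"
  by (simp add: fa_carrier_iff fa_supp_var)

lemma fa_carrier_zero: "fa_zero \<in> fa_carrier"
  by (simp add: fa_carrier_iff fa_supp_zero)

lemma eval_op_add:
  assumes "f \<in> fa_carrier" "g \<in> fa_carrier"
  shows "eval_op h (fa_add f g) = eval_op h f + eval_op h g"
proof -
  let ?A = "fa_supp f \<union> fa_supp g"
  have A: "finite ?A" using assms by (simp add: fa_carrier_iff)
  have "eval_op h (fa_add f g) = (\<Sum>w\<in>?A. scalar (fa_add f g w) * prod_list (map h w))"
    using eval_op_superset[OF A fa_supp_add] .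
  moreover have "eval_op h f = (\<Sum>w\<in>?A. scalar (f w) * prod_list (map h w))"
    and "eval_op h g = (\<Sum>w\<in>?A. scalar (g w) * prod_list (map h w))"
    using eval_op_superset[OF A] by auto
  ultimately show ?thesis by (simp add: fa_add_def scalar_add distrib_right sum.distrib)
qed

lemma eval_op_sub:
  assumes "f \<in> fa_carrier" "g \<in> fa_carrier"
  shows "eval_op h (fa_sub f g) = eval_op h f - eval_op h g"
proof -
  let ?A = "fa_supp f \<union> fa_supp g"
  have A: "finite ?A" using assms by (simp add: fa_carrier_iff)
  have "eval_op h (fa_sub f g) = (\<Sum>w\<in>?A. scalar (fa_sub f g w) * prod_list (map h w))"
    using eval_op_superset[OF A fa_supp_sub] .
  moreover have "eval_op h f = (\<Sum>w\<in>?A. scalar (f w) * prod_list (map h w))"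
    and "eval_op h g = (\<Sum>w\<in>?A. scalar (g w) * prod_list (map h w))"
    using eval_op_superset[OF A] by auto
  ultimately show ?thesis by (simp add: fa_sub_def scalar_diff left_diff_distrib sum_subtractf)
qed

lemma eval_op_smult:
  assumes "f \<in> fa_carrier"
  shows "eval_op h (fa_smult c f) = scalar c * eval_op h f"
  using eval_op_superset[OF _ fa_supp_smult, of f h c] assms
  by (simp add: fa_carrier_iff fa_smult_def eval_op_def sum_distrib_left mult.assoc
      flip: scalar_mult)

lemma eval_op_zero: "eval_op h fa_zero = 0"
  by (simp add: eval_op_def fa_supp_zero)

lemma eval_op_one: "eval_op h fa_one = 1"
  unfolding eval_op_def fa_supp_one by (simp add: fa_one_def scalar_one)

lemma eval_op_var: "eval_op h (fa_var i) = h i"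
  unfolding eval_op_def fa_supp_var by (simp add: fa_var_def scalar_one)

lemma sum_factorisations:
  fixes F :: "'a list \<Rightarrow> 'a list \<Rightarrow> 'b::comm_monoid_add"
  assumes fin: "finite A" "finite U" "finite V" and UV: "(\<lambda>(u, v). u @ v) ` (U \<times> V) \<subseteq> A"
    and vanish: "\<And>u v. (u, v) \<notin> U \<times> V \<Longrightarrow> F u v = 0"
  shows "(\<Sum>w\<in>A. \<Sum>i\<le>length w. F (take i w) (drop i w)) = (\<Sum>(u, v)\<in>U \<times> V. F u v)"
proof -
  let ?split = "\<lambda>(u, v). (u @ v, length u)"
  have "(\<Sum>w\<in>A. \<Sum>i\<le>length w. F (take i w) (drop i w)) =
      (\<Sum>(w, i)\<in>Sigma A (\<lambda>w. {..length w}). F (take i w) (drop i w))"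
    using fin(1) by (simp add: sum.Sigma)
  also have "\<dots> = (\<Sum>(w, i)\<in>?split ` (U \<times> V). F (take i w) (drop i w))"
  proof (rule sum.mono_neutral_right)
    show "finite (Sigma A (\<lambda>w. {..length w}))" using fin(1) by auto
    show "?split ` (U \<times> V) \<subseteq> Sigma A (\<lambda>w. {..length w})" using UV by auto
    show "\<forall>x\<in>Sigma A (\<lambda>w. {..length w}) - ?split ` (U \<times> V). (case x of (w, i) \<Rightarrow> F (take i w) (drop i w)) = 0"
    proof (clarify)
      fix w i assume "i \<le> length w" "(w, i) \<notin> ?split ` (U \<times> V)"
      then have "(take i w, drop i w) \<notin> U \<times> V"
        by (metis (no_types, lifting) append_take_drop_id case_prod_conv image_eqI length_take
            min_absorb2)
      then show "F (take i w) (drop i w) = 0" by (rule vanish)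
    qed
  qed
  also have "\<dots> = (\<Sum>(u, v)\<in>U \<times> V. F u v)"
    by (subst sum.reindex) (auto simp: inj_on_def intro!: sum.cong)
  finally show ?thesis .
qed

lemma eval_op_mult:
  assumes "f \<in> fa_carrier" "g \<in> fa_carrier"
  shows "eval_op h (fa_mult f g) = eval_op h f * eval_op h g"
proof -
  let ?A = "(\<lambda>(u, v). u @ v) ` (fa_supp f \<times> fa_supp g)"
  let ?P = "\<lambda>w. prod_list (map h w)"
  define F where "F u v = scalar (f u) * scalar (g v) * ?P (u @ v)" for u v
  have fin: "finite (fa_supp f)" "finite (fa_supp g)" using assms by (simp_all add: fa_carrier_iff)
  have "eval_op h (fa_mult f g) = (\<Sum>w\<in>?A. scalar (fa_mult f g w) * ?P w)"
    using fin by (intro eval_op_superset fa_supp_mult) auto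
  also have "\<dots> = (\<Sum>w\<in>?A. \<Sum>i\<le>length w. F (take i w) (drop i w))"
    by (simp add: fa_mult_def F_def scalar_sum sum_distrib_right flip: scalar_mult)
  also have "\<dots> = (\<Sum>(u, v)\<in>fa_supp f \<times> fa_supp g. F u v)"
    using fin by (intro sum_factorisations) (auto simp: F_def fa_supp_def scalar_zero)
  also have "\<dots> = (\<Sum>(u, v)\<in>fa_supp f \<times> fa_supp g. (scalar (f u) * ?P u) * (scalar (g v) * ?P v))"
  proof (intro sum.cong refl, clarify)
    fix u v
    have "F u v = scalar (f u) * (scalar (g v) * ?P u) * ?P v" by (simp add: F_def mult.assoc)
    then show "F u v = (scalar (f u) * ?P u) * (scalar (g v) * ?P v)"
      by (simp only: scalar_commute[of "g v" "?P u"] mult.assoc)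
  qed
  also have "\<dots> = eval_op h f * eval_op h g"
    by (simp add: eval_op_def sum_product sum.cartesian_product)
  finally show ?thesis .
qed

lemma fa_carrier_prodlist: "\<forall>x\<in>set xs. x \<in> fa_carrier \<Longrightarrow> fa_prodlist xs \<in> fa_carrier"
  by (induction xs) (auto simp: fa_prodlist_def fa_carrier_one fa_carrier_mult)

lemma eval_op_prodlist:
  "\<forall>x\<in>set xs. x \<in> fa_carrier \<Longrightarrow> eval_op h (fa_prodlist xs) = prod_list (map (eval_op h) xs)"
proof (induction xs)
  case Nil
  show ?case by (simp add: fa_prodlist_def eval_op_one)
next
  case (Cons x xs)
  then have "fa_prodlist xs \<in> fa_carrier" by (intro fa_carrier_prodlist) auto
  with Cons show ?case by (simp add: fa_prodlist_def eval_op_mult)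
qed

lemma fa_carrier_pow: "a \<in> fa_carrier \<Longrightarrow> fa_pow a n \<in> fa_carrier"
  unfolding fa_pow_def by (intro fa_carrier_prodlist) simp

lemma eval_op_pow: "a \<in> fa_carrier \<Longrightarrow> eval_op h (fa_pow a n) = eval_op h a ^ n"
  unfolding fa_pow_def by (subst eval_op_prodlist) (auto simp: prod_list_replicate)

lemma fa_carrier_comm: "a \<in> fa_carrier \<Longrightarrow> b \<in> fa_carrier \<Longrightarrow> fa_comm a b \<in> fa_carrier"
  unfolding fa_comm_def by (intro fa_carrier_sub fa_carrier_mult)

lemma eval_op_comm:
  "a \<in> fa_carrier \<Longrightarrow> b \<in> fa_carrier \<Longrightarrow>
    eval_op h (fa_comm a b) = eval_op h a * eval_op h b - eval_op h b * eval_op h a"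
  unfolding fa_comm_def by (simp add: eval_op_sub fa_carrier_mult eval_op_mult)

definition kappa_op :: "nat \<Rightarrow> 'k::field linop \<Rightarrow> 'k linop \<Rightarrow> 'k linop" where
  "kappa_op p u v = (u * v - v * u) * u ^ (p - 1) * v ^ (p - 1)"

lemma fa_carrier_kappa: "a \<in> fa_carrier \<Longrightarrow> b \<in> fa_carrier \<Longrightarrow> kappa p a b \<in> fa_carrier"
  unfolding kappa_def by (intro fa_carrier_mult fa_carrier_comm fa_carrier_pow)

lemma eval_op_kappa:
  "a \<in> fa_carrier \<Longrightarrow> b \<in> fa_carrier \<Longrightarrow>
    eval_op h (kappa p a b) = kappa_op p (eval_op h a) (eval_op h b)"
  unfolding kappa_def kappa_op_def
  by (simp add: eval_op_mult fa_carrier_mult fa_carrier_comm fa_carrier_pow eval_op_comm eval_op_pow)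

lemma fa_carrier_w_poly: "\<forall>r. u r \<in> fa_carrier \<Longrightarrow> w_poly p m u \<in> fa_carrier"
  unfolding w_poly_def by (intro fa_carrier_prodlist) (auto intro: fa_carrier_kappa)

lemma eval_op_w_poly:
  "\<forall>r. u r \<in> fa_carrier \<Longrightarrow> eval_op h (w_poly p m u) =
    prod_list (map (\<lambda>r. kappa_op p (eval_op h (u (2*r - 1))) (eval_op h (u (2*r)))) [1..<m+1])"
  unfolding w_poly_def
  by (subst eval_op_prodlist) (auto intro: fa_carrier_kappa simp: eval_op_kappa o_def)

lemma fa_lincomb:
  assumes "finite W" "\<forall>w\<in>W. g w \<in> fa_carrier"
  shows "(\<lambda>v. \<Sum>w\<in>W. c w * g w v) \<in> fa_carrier \<and>
    eval_op h (\<lambda>v. \<Sum>w\<in>W. c w * g w v) = (\<Sum>w\<in>W. scalar (c w) * eval_op h (g w))"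
  using assms
proof (induction W rule: finite_induct)
  case empty
  have "(\<lambda>v. \<Sum>w\<in>{}. c w * g w v) = fa_zero" by (simp add: fa_zero_def)
  then show ?case by (simp add: fa_carrier_zero eval_op_zero)
next
  case (insert x F)
  have "(\<lambda>v. \<Sum>w\<in>insert x F. c w * g w v) = fa_add (fa_smult (c x) (g x)) (\<lambda>v. \<Sum>w\<in>F. c w * g w v)"
    using insert by (simp add: fa_add_def fa_smult_def)
  with insert show ?case
    by (simp add: fa_carrier_add fa_carrier_smult eval_op_add eval_op_smult)
qed

lemma eval_op_subst:
  assumes f: "f \<in> fa_carrier" and \<sigma>: "\<forall>i. \<sigma> i \<in> fa_carrier"
  shows "fa_subst \<sigma> f \<in> fa_carrier \<and> eval_op h (fa_subst \<sigma> f) = eval_op (\<lambda>i. eval_op h (\<sigma> i)) f"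
proof -
  have fin: "finite (fa_supp f)" using f by (simp add: fa_carrier_iff)
  have carrier: "\<forall>w\<in>fa_supp f. fa_prodlist (map \<sigma> w) \<in> fa_carrier"
    using \<sigma> by (auto intro!: fa_carrier_prodlist)
  have subst: "fa_subst \<sigma> f = (\<lambda>v. \<Sum>w\<in>fa_supp f. f w * fa_prodlist (map \<sigma> w) v)"
    by (simp add: fa_subst_def fa_supp_def)
  have "eval_op h (fa_subst \<sigma> f) = (\<Sum>w\<in>fa_supp f. scalar (f w) * eval_op h (fa_prodlist (map \<sigma> w)))"
    unfolding subst using fa_lincomb[OF fin carrier] by blast
  also have "\<dots> = (\<Sum>w\<in>fa_supp f. scalar (f w) * prod_list (map (\<lambda>i. eval_op h (\<sigma> i)) w))"
    using \<sigma> by (intro sum.cong refl) (simp add: eval_op_prodlist o_def)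
  also have "\<dots> = eval_op (\<lambda>i. eval_op h (\<sigma> i)) f"
    by (rule eval_op_def[symmetric])
  finally show ?thesis unfolding subst using fa_lincomb[OF fin carrier] by blast
qed

section \<open>The subalgebra B and the values of \<kappa>\<close>

definition Dgraph :: "'k::field linop set" where
  "Dgraph = {x. \<exists>a\<in>Even. x = a + sder a}"

lemma DgraphI: "a \<in> Even \<Longrightarrow> a + sder a \<in> Dgraph"
  unfolding Dgraph_def by blast

lemma DgraphE:
  assumes "x \<in> Dgraph"
  obtains a where "a \<in> Even" "x = a + sder a"
  using assms unfolding Dgraph_def by blast

lemma Dgraph_zero: "0 \<in> Dgraph"
  using DgraphI[OF Even_zero] by (simp add: sder_zero)

lemma Dgraph_one: "1 \<in> (Dgraph :: 'k::field linop set)"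
proof -
  have "sder (1 :: 'k linop) = 0" using sder_scalar[of 1] by (simp add: scalar_one)
  then show ?thesis using DgraphI[of "1 :: 'k linop"] Even_one by simp
qed

lemma Dgraph_add: "x \<in> Dgraph \<Longrightarrow> y \<in> Dgraph \<Longrightarrow> x + y \<in> Dgraph"
  by (elim DgraphE) (metis DgraphI Even_add sder_add add.assoc add.left_commute)

lemma Dgraph_scalar_mult: "x \<in> Dgraph \<Longrightarrow> scalar c * x \<in> Dgraph"
  by (elim DgraphE) (metis DgraphI Even_mult Even_scalar sder_scalar_mult distrib_left)

lemma Dgraph_mult:
  assumes "x \<in> Dgraph" "y \<in> Dgraph"
  shows "x * y \<in> Dgraph"
proof -
  obtain a where a: "a \<in> Even" "x = a + sder a" using assms(1) by (rule DgraphE)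
  obtain c where c: "c \<in> Even" "y = c + sder c" using assms(2) by (rule DgraphE)
  have Da: "sder a \<in> Odd" using sder_Even_Odd(1)[OF a(1)] .
  have "sder (a * c + sder a * sder c) = sder a * c + a * sder c"
    by (simp add: sder_add sder_mult pconj_Even_Odd(1)[OF a(1)] pconj_Even_Odd(2)[OF Da]
        sder_sder_Even_Odd(1)[OF a(1)] sder_sder_Even_Odd(1)[OF c(1)])
  then have "x * y = (a * c + sder a * sder c) + sder (a * c + sder a * sder c)"
    unfolding a(2) c(2) by (simp add: algebra_simps)
  moreover have "a * c + sder a * sder c \<in> Even"
    using a c Da sder_Even_Odd(1)[OF c(1)] by (intro Even_add Even_mult Even_mult_Odd)
  ultimately show ?thesis using DgraphI by metis
qed

lemma Dgraph_sum: "finite A \<Longrightarrow> (\<forall>x\<in>A. g x \<in> Dgraph) \<Longrightarrow> sum g A \<in> Dgraph"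
  by (induction A rule: finite_induct) (auto intro: Dgraph_zero Dgraph_add)

lemma Dgraph_prod_list: "\<forall>x\<in>set xs. x \<in> Dgraph \<Longrightarrow> prod_list xs \<in> Dgraph"
  by (induction xs) (auto intro: Dgraph_one Dgraph_mult)

lemma eval_op_Dgraph: "\<forall>i. h i \<in> Dgraph \<Longrightarrow> f \<in> fa_carrier \<Longrightarrow> eval_op h f \<in> Dgraph"
  unfolding eval_op_def
  by (intro Dgraph_sum) (auto simp: fa_carrier_iff intro!: Dgraph_scalar_mult Dgraph_prod_list)

lemma supercommutator_plus_sder:
  assumes "a \<in> Even" "c \<in> Even"
  shows "(a + sder a) * (c + sder c) - (c + sder c) * (a + sder a) = 2 * (sder a * sder c)"
proof -
  have "(a + sder a) * (c + sder c) - (c + sder c) * (a + sder a) =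
      (a * c - c * a) + (a * sder c - sder c * a) + (sder a * c - c * sder a)
      + (sder a * sder c - sder c * sder a)"
    by (simp add: algebra_simps)
  also have "\<dots> = sder a * sder c - sder c * sder a"
    using Even_commute_Even[OF assms] Even_commute_Odd[OF assms(1) sder_Even_Odd(1)[OF assms(2)]]
      Even_commute_Odd[OF assms(2) sder_Even_Odd(1)[OF assms(1)]] by simp
  also have "\<dots> = 2 * (sder a * sder c)"
    using Odd_anticommute_Odd[OF sder_Even_Odd(1)[OF assms(2)] sder_Even_Odd(1)[OF assms(1)]]
    by (simp add: mult_2)
  finally show ?thesis .
qed

lemma mult_power_add_annihilated:
  fixes Q a A :: "'a::ring_1"
  assumes "Q * A = 0" "Q * a = a * Q"
  shows "Q * (a + A) ^ n = Q * a ^ n"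
proof (induction n)
  case (Suc n)
  have "Q * (a + A) ^ Suc n = (Q * a + Q * A) * (a + A) ^ n"
    by (simp only: power_Suc mult.assoc[symmetric] distrib_left)
  also have "\<dots> = a * (Q * (a + A) ^ n)"
    by (simp add: assms mult.assoc)
  also have "\<dots> = (a * Q) * a ^ n"
    by (simp add: Suc mult.assoc)
  finally show ?case by (simp add: assms(2)[symmetric] mult.assoc)
qed simp

lemma kappa_op_plus_sder:
  assumes two: "(2::'k::field) \<noteq> 0" and a: "a \<in> (Even :: 'k linop set)" and c: "c \<in> Even"
  shows "kappa_op p (a + sder a) (c + sder c) = 2 * (omega p a * omega p c)"
proof -
  define Q where "Q = sder a * sder c"
  have A: "sder a \<in> Odd" and C: "sder c \<in> Odd" using sder_Even_Odd(1) a c by auto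
  have Q: "Q \<in> Even" unfolding Q_def using A C by (rule Even_mult_Odd)
  have "Q * sder a = - (sder a * sder a * sder c)"
    using Odd_anticommute_Odd[OF C A] by (simp add: Q_def mult.assoc)
  then have QA: "Q * sder a = 0" using Odd_square[OF two A] by simp
  have "Q * a ^ (p - 1) * sder c = sder a * (sder c * sder c) * a ^ (p - 1)"
    using Even_commute_Odd[OF Even_power[OF a] C] by (simp add: Q_def mult.assoc)
  then have QaC: "Q * a ^ (p - 1) * sder c = 0" using Odd_square[OF two C] by simp
  have "kappa_op p (a + sder a) (c + sder c) = 2 * (Q * (a + sder a) ^ (p - 1) * (c + sder c) ^ (p - 1))"
    unfolding kappa_op_def supercommutator_plus_sder[OF a c] Q_def by (simp add: mult.assoc)
  also have "Q * (a + sder a) ^ (p - 1) = Q * a ^ (p - 1)"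
    using QA Even_commute_Even[OF Q a] by (rule mult_power_add_annihilated)
  also have "Q * a ^ (p - 1) * (c + sder c) ^ (p - 1) = Q * a ^ (p - 1) * c ^ (p - 1)"
    using QaC Even_commute_Even[OF Even_mult[OF Q Even_power[OF a]] c]
    by (rule mult_power_add_annihilated)
  also have "Q * a ^ (p - 1) * c ^ (p - 1) = omega p a * omega p c"
  proof -
    have "omega p a * omega p c = a ^ (p - 1) * (sder a * c ^ (p - 1)) * sder c"
      by (simp add: omega_def mult.assoc)
    also have "\<dots> = a ^ (p - 1) * (c ^ (p - 1) * sder a) * sder c"
      by (simp only: Even_commute_Odd[OF Even_power[OF c] A])
    also have "\<dots> = a ^ (p - 1) * c ^ (p - 1) * Q"
      by (simp add: Q_def mult.assoc)
    finally have "omega p a * omega p c = a ^ (p - 1) * c ^ (p - 1) * Q" .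
    then show ?thesis
      using Even_commute_Even[OF Q Even_mult[OF Even_power[OF a] Even_power[OF c]]]
      by (simp add: mult.assoc)
  qed
  finally show ?thesis .
qed

lemma cohom_homog_kappa_op:
  assumes two: "(2::'k::field) \<noteq> 0" and p: "2 \<le> p" and x: "x \<in> (Dgraph :: 'k linop set)"
    and y: "y \<in> Dgraph"
  shows "cohom_homog 2 (kappa_op p x y)"
proof -
  obtain a where a: "a \<in> Even" "x = a + sder a" using x by (rule DgraphE)
  obtain c where c: "c \<in> Even" "y = c + sder c" using y by (rule DgraphE)
  have "cohom_homog (0 + (1 + 1)) (scalar 2 * (omega p a * omega p c))"
    by (intro cohom_homog_mult cohom_homog_scalar cohom_homog_omega two p a(1) c(1))
  moreover have "scalar (2::'k) = 2" by (metis of_nat_numeral scalar_of_nat)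
  ultimately show ?thesis
    using kappa_op_plus_sder[OF two a(1) c(1)] a(2) c(2) by (simp add: numeral_2_eq_2)
qed

section \<open>The value of w_(M+1) at x_i = t_i + e_i\<close>

definition basis_vec :: "(nat \<Rightarrow> nat) \<Rightarrow> nat set \<Rightarrow> 'k::field svec" where
  "basis_vec a S = (\<lambda>b. if b = (a, S) then 1 else 0)"

lemma vacuum_basis_vec: "vacuum = basis_vec (\<lambda>_. 0) {}"
  by (simp add: vacuum_def basis_vec_def)

lemma mult_e_basis_vec:
  assumes "finite S" "i \<notin> S" "\<forall>j\<in>S. i < j"
  shows "lapp (mult_e i) (basis_vec a S :: 'k::field svec) = basis_vec a (insert i S)"
proof (rule ext, clarify)
  fix b :: "nat \<Rightarrow> nat" and T
  show "lapp (mult_e i) (basis_vec a S :: 'k svec) (b, T) = basis_vec a (insert i S) (b, T)"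
  proof (cases "(b, T) = (a, insert i S)")
    case True
    have none_below: "{j \<in> insert i S. j < i} = {}" using assms(3) by auto
    have "ext_sign i (insert i S) = (1::'k)" unfolding ext_sign_def none_below by simp
    moreover have "insert i S - {i} = S" using assms(2) by simp
    ultimately show ?thesis using True assms(1) by (simp add: lapp_mult_e basis_vec_def)
  next
    case False
    then have "\<not> (finite T \<and> i \<in> T \<and> (b, T - {i}) = (a, S))" by auto
    then show ?thesis using False by (auto simp: lapp_mult_e basis_vec_def)
  qed
qed

lemma mult_t_basis_vec: "lapp (mult_t i) (basis_vec a S :: 'k::field svec) = basis_vec (a(i := a i + 1)) S"
proof (rule ext, clarify)
  fix b :: "nat \<Rightarrow> nat" and T
  have "0 < b i \<and> b(i := b i - 1) = a \<longleftrightarrow> b = a(i := a i + 1)"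
    by (auto simp: fun_eq_iff split: if_splits)
  then show "lapp (mult_t i) (basis_vec a S :: 'k svec) (b, T) = basis_vec (a(i := a i + 1)) S (b, T)"
    by (auto simp: lapp_mult_t basis_vec_def)
qed

lemma mult_t_power_basis_vec:
  "lapp (mult_t i ^ n) (basis_vec a S :: 'k::field svec) = basis_vec (a(i := a i + n)) S"
proof (induction n)
  case (Suc n)
  have "lapp (mult_t i ^ Suc n) (basis_vec a S :: 'k svec) = lapp (mult_t i) (basis_vec (a(i := a i + n)) S)"
    by (simp only: power_Suc lapp_times Suc)
  also have "\<dots> = basis_vec (a(i := a i + Suc n)) S"
    by (simp add: mult_t_basis_vec)
  finally show ?case .
qed (simp add: lapp_one)

lemma omega_mult_t_basis_vec:
  assumes "finite S" "i \<notin> S" "\<forall>j\<in>S. i < j" "a i = 0"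
  shows "lapp (mult_t i ^ q * mult_e i) (basis_vec a S :: 'k::field svec) = basis_vec (a(i := q)) (insert i S)"
  by (simp add: lapp_times mult_e_basis_vec[OF assms(1-3)] mult_t_power_basis_vec assms(4))

definition t_plus_e :: "nat \<Rightarrow> 'k::field linop" where
  "t_plus_e i = mult_t i + mult_e i"

lemma t_plus_e_Dgraph: "t_plus_e i \<in> Dgraph"
  using DgraphI[OF Even_mult_t[of i]] by (simp add: t_plus_e_def sder_mult_t)

lemma kappa_op_t_plus_e:
  assumes "(2::'k::field) \<noteq> 0"
  shows "kappa_op p (t_plus_e i) (t_plus_e j :: 'k linop)
    = 2 * ((mult_t i ^ (p - 1) * mult_e i) * (mult_t j ^ (p - 1) * mult_e j))"
  using kappa_op_plus_sder[OF assms Even_mult_t Even_mult_t]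
  by (simp add: t_plus_e_def omega_def sder_mult_t)

text \<open>The index of the monomial t_(2k-1)^(p-1) \<dots> t_(2M+2)^(p-1) e_(2k-1) \<dots> e_(2M+2).\<close>

definition top_exps :: "nat \<Rightarrow> nat \<Rightarrow> nat \<Rightarrow> nat \<Rightarrow> nat" where
  "top_exps p M k = (\<lambda>i. if 2 * k - 1 \<le> i \<and> i \<le> 2 * M + 2 then p - 1 else 0)"

definition top_set :: "nat \<Rightarrow> nat \<Rightarrow> nat set" where
  "top_set M k = {i. 2 * k - 1 \<le> i \<and> i \<le> 2 * M + 2}"

lemma top_set_1: "top_set M 1 = {1..2 * M + 2}"
  by (auto simp: top_set_def)

lemma kappa_op_t_plus_e_top_set:
  assumes two: "(2::'k::field) \<noteq> 0" and n: "1 \<le> n" "n \<le> M + 1"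
  shows "lapp (kappa_op p (t_plus_e (2*n - 1)) (t_plus_e (2*n)))
      (basis_vec (top_exps p M (Suc n)) (top_set M (Suc n)) :: 'k svec)
    = (\<lambda>b. 2 * basis_vec (top_exps p M n) (top_set M n) b)"
proof -
  have fin: "finite (top_set M (Suc n))"
    unfolding top_set_def by (rule finite_subset[of _ "{..2*M+2}"]) auto
  have "lapp (mult_t (2*n) ^ (p - 1) * mult_e (2*n))
        (basis_vec (top_exps p M (Suc n)) (top_set M (Suc n)) :: 'k svec)
      = basis_vec ((top_exps p M (Suc n))(2*n := p - 1)) (insert (2*n) (top_set M (Suc n)))"
    by (rule omega_mult_t_basis_vec[OF fin]) (auto simp: top_set_def top_exps_def)
  moreover have "lapp (mult_t (2*n - 1) ^ (p - 1) * mult_e (2*n - 1))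
        (basis_vec ((top_exps p M (Suc n))(2*n := p - 1)) (insert (2*n) (top_set M (Suc n))) :: 'k svec)
      = basis_vec ((top_exps p M (Suc n))(2*n := p - 1, 2*n - 1 := p - 1))
          (insert (2*n - 1) (insert (2*n) (top_set M (Suc n))))"
    using fin n by (intro omega_mult_t_basis_vec) (auto simp: top_set_def top_exps_def)
  moreover have "(top_exps p M (Suc n))(2*n := p - 1, 2*n - 1 := p - 1) = top_exps p M n"
    "insert (2*n - 1) (insert (2*n) (top_set M (Suc n))) = top_set M n"
    using n by (auto simp: top_exps_def top_set_def fun_eq_iff)
  ultimately show ?thesis
    by (simp add: kappa_op_t_plus_e[OF two] lapp_times lapp_of_nat[of 2, simplified] flip: mult.assoc)
qed

lemma kappa_op_t_plus_e_prod_vacuum: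
  assumes two: "(2::'k::field) \<noteq> 0" and k: "1 \<le> k" "k \<le> M + 2"
  shows "lapp (prod_list (map (\<lambda>r. kappa_op p (t_plus_e (2*r - 1)) (t_plus_e (2*r) :: 'k linop))
      [k..<M+2])) vacuum = (\<lambda>b. 2 ^ (M + 2 - k) * basis_vec (top_exps p M k) (top_set M k) b)"
  using k(2)
proof (induction k rule: inc_induct)
  case base
  have "top_exps p M (M + 2) = (\<lambda>_. 0)" "top_set M (M + 2) = {}"
    by (auto simp: top_exps_def top_set_def fun_eq_iff)
  then show ?case by (simp add: lapp_one vacuum_basis_vec)
next
  case (step n)
  define G where "G r = kappa_op p (t_plus_e (2*r - 1)) (t_plus_e (2*r) :: 'k linop)" for r
  have "lapp (G n) (\<lambda>b. 2 ^ (M + 2 - Suc n) * basis_vec (top_exps p M (Suc n)) (top_set M (Suc n)) b)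
      = (\<lambda>b. 2 ^ (M + 2 - Suc n) * (2 * basis_vec (top_exps p M n) (top_set M n) b))"
    using kappa_op_t_plus_e_top_set[OF two, of n M p] k(1) step(1,2)
    by (simp add: G_def lapp_smult_vec)
  moreover have "[n..<M+2] = n # [Suc n..<M+2]" using step(2) by (simp add: upt_conv_Cons)
  moreover have "M + 2 - n = Suc (M + 2 - Suc n)" using step(2) by simp
  then have "(2::'k) ^ (M + 2 - n) = 2 ^ (M + 2 - Suc n) * 2" by (simp only: power_Suc2)
  ultimately show ?case
    using step(3) by (simp add: G_def lapp_times mult.assoc)
qed

section \<open>T-spaces\<close>

lemma T_closure_least: "T_space V \<Longrightarrow> H \<subseteq> V \<Longrightarrow> T_closure H \<subseteq> V"
  unfolding T_closure_def by blast

lemma T_closure_incl: "H \<subseteq> T_closure H"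
  unfolding T_closure_def by blast

lemma T_closure_mono: "H \<subseteq> H' \<Longrightarrow> T_closure H \<subseteq> T_closure H'"
  unfolding T_closure_def by blast

lemma T_space_T_closure:
  assumes "T_space V" "H \<subseteq> V"
  shows "T_space (T_closure H)"
proof -
  let ?F = "{V. T_space V \<and> H \<subseteq> V}"
  have "V \<in> ?F" using assms by simp
  then show ?thesis unfolding T_closure_def T_space_def[of "\<Inter>?F"] is_subspace_def[of "\<Inter>?F"]
    by (intro conjI allI impI ballI) (auto simp: T_space_def is_subspace_def)
qed

lemma T_space_UN_mono:
  fixes V :: "nat \<Rightarrow> 'k::field fa set"
  assumes mono: "mono V" and T: "\<And>M. T_space (V M)"
  shows "T_space (\<Union>M. V M)"
  unfolding T_space_def is_subspace_def
proof (intro conjI allI impI ballI)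
  have V: "V M \<subseteq> fa_carrier" "fa_zero \<in> V M" "f \<in> V M \<Longrightarrow> fa_smult c f \<in> V M"
    "\<forall>i. \<sigma> i \<in> fa_carrier \<Longrightarrow> f \<in> V M \<Longrightarrow> fa_subst \<sigma> f \<in> V M"
    "f \<in> V M \<Longrightarrow> g \<in> V M \<Longrightarrow> fa_add f g \<in> V M" for M f g c \<sigma>
    using T[of M] unfolding T_space_def is_subspace_def by blast+
  show "(\<Union>M. V M) \<subseteq> fa_carrier" "fa_zero \<in> (\<Union>M. V M)"
    using V(1,2) by blast+
  show "fa_smult c f \<in> (\<Union>M. V M)" if "f \<in> (\<Union>M. V M)" for c f
    using that V(3) by blast
  show "fa_subst \<sigma> f \<in> (\<Union>M. V M)" if "\<forall>i. \<sigma> i \<in> fa_carrier" "f \<in> (\<Union>M. V M)" for \<sigma> f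
    using that V(4) by blast
  show "fa_add f g \<in> (\<Union>M. V M)" if f: "f \<in> (\<Union>M. V M)" and g: "g \<in> (\<Union>M. V M)" for f g
  proof -
    obtain m n where "f \<in> V m" "g \<in> V n" using f g by blast
    moreover have "V m \<subseteq> V (max m n)" "V n \<subseteq> V (max m n)"
      using monoD[OF mono] by simp_all
    ultimately show ?thesis using V(5)[of f "max m n" g] by blast
  qed
qed

text \<open>A finite basis would already lie in the T-space generated by a single member of the chain.\<close>

lemma not_finitely_based_T_closure_UN:
  fixes W V :: "nat \<Rightarrow> 'k::field fa set"
  assumes mono: "mono W" and T: "\<And>M. T_space (V M)" and WV: "\<And>M. W M \<subseteq> V M"
    and sep: "\<And>M. \<not> (\<Union>N. W N) \<subseteq> V M"
  shows "\<not> finitely_based (T_closure (\<Union>M. W M))"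
proof
  assume "finitely_based (T_closure (\<Union>M. W M))"
  then obtain H where H: "finite H" "T_closure (\<Union>M. W M) = T_closure H"
    unfolding finitely_based_def by blast
  define C where "C M = T_closure (W M)" for M
  have C: "T_space (C M)" for M unfolding C_def using T WV by (rule T_space_T_closure)
  have "mono C" unfolding C_def using mono by (intro monoI T_closure_mono) (simp add: monoD)
  then have "T_space (\<Union>M. C M)" using C by (rule T_space_UN_mono)
  moreover have "(\<Union>M. W M) \<subseteq> (\<Union>M. C M)" unfolding C_def using T_closure_incl by blast
  ultimately have "T_closure (\<Union>M. W M) \<subseteq> (\<Union>M. C M)" by (rule T_closure_least)
  then have "H \<subseteq> (\<Union>M. C M)" using H(2) T_closure_incl[of H] by blast
  moreover have "subset.chain UNIV (range C)"
    unfolding subset.chain_def using monoD[OF \<open>mono C\<close>] nat_le_linear by blast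
  ultimately obtain B where "B \<in> range C" "H \<subseteq> B"
    using finite_subset_Union_chain[OF H(1)] by blast
  then obtain M where "H \<subseteq> C M" by blast
  then have "T_closure H \<subseteq> V M"
    using T_closure_least[OF T] T_closure_least[OF T WV] unfolding C_def by blast
  then have "(\<Union>N. W N) \<subseteq> V M" using H(2) T_closure_incl by blast
  with sep show False by blast
qed

section \<open>The separating T-spaces\<close>

lemma cohom_homog_vacuum:
  assumes "cohom_homog q X" "q \<noteq> card S" "finite S" "\<forall>i\<in>S. of_nat (a i + 1) = (0::'k::field)"
  shows "lapp X (vacuum :: 'k svec) (a, S) = 0"
proof -
  obtain Z Y where "X = Z + sder Y" "ext_homog q Z" using assms(1) unfolding cohom_homog_def by blast
  then show ?thesis
    using ext_homog_vacuum[of q Z S a] sder_vacuum[OF assms(3,4), of Y] assms(2) by (simp add: lapp_plus)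
qed

definition sep_space :: "nat \<Rightarrow> nat \<Rightarrow> 'k::field fa set" where
  "sep_space p M = {f \<in> fa_carrier. \<forall>h. (\<forall>i. h i \<in> Dgraph) \<longrightarrow>
     lapp (eval_op h f) vacuum (top_exps p M 1, top_set M 1) = 0}"

lemma T_space_sep_space: "T_space (sep_space p M)"
  unfolding T_space_def is_subspace_def
proof (intro conjI allI impI ballI)
  show "sep_space p M \<subseteq> fa_carrier" unfolding sep_space_def by blast
  show "fa_zero \<in> sep_space p M"
    unfolding sep_space_def by (simp add: fa_carrier_zero eval_op_zero lapp_zero)
  show "fa_add f g \<in> sep_space p M" if "f \<in> sep_space p M" "g \<in> sep_space p M" for f g
    using that unfolding sep_space_def by (simp add: fa_carrier_add eval_op_add lapp_plus)
  show "fa_smult c f \<in> sep_space p M" if "f \<in> sep_space p M" for c f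
    using that unfolding sep_space_def by (simp add: fa_carrier_smult eval_op_smult lapp_times lapp_scalar)
  show "fa_subst \<sigma> f \<in> sep_space p M" if \<sigma>: "\<forall>i. \<sigma> i \<in> fa_carrier" and f: "f \<in> sep_space p M"
    for \<sigma> f
  proof -
    have f_carrier: "f \<in> fa_carrier" using f unfolding sep_space_def by blast
    have "lapp (eval_op h (fa_subst \<sigma> f)) vacuum (top_exps p M 1, top_set M 1) = 0"
      if "\<forall>i. h i \<in> Dgraph" for h
    proof -
      have "\<forall>i. eval_op h (\<sigma> i) \<in> Dgraph" using that \<sigma> by (auto intro: eval_op_Dgraph)
      then show ?thesis using f eval_op_subst[OF f_carrier \<sigma>] unfolding sep_space_def by simp
    qed
    then show ?thesis unfolding sep_space_def using eval_op_subst[OF f_carrier \<sigma>] by blast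
  qed
qed

lemma W_subset_sep_space:
  assumes two: "(2::'k::field) \<noteq> 0" and p: "2 \<le> p" and char: "of_nat p = (0::'k)"
  shows "{fa_one} \<union> W_set p M \<subseteq> (sep_space p M :: 'k fa set)"
proof -
  have fin: "finite (top_set M 1)" and card: "card (top_set M 1) = 2 * M + 2"
    unfolding top_set_1 by simp_all
  have top: "\<forall>i\<in>top_set M 1. of_nat (top_exps p M 1 i + 1) = (0::'k)"
    using p char by (auto simp: top_exps_def top_set_def)
  have "fa_one \<in> (sep_space p M :: 'k fa set)"
    unfolding sep_space_def top_set_1 by (simp add: fa_carrier_one eval_op_one lapp_one vacuum_def)
  moreover have "w \<in> sep_space p M" if w: "w \<in> W_set p M" for w :: "'k fa"
  proof -
    obtain j f where j: "1 \<le> j" "j \<le> M" and w: "w = w_poly p j (\<lambda>r. fa_var (f r))"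
      using w unfolding W_set_def by blast
    have vars: "\<forall>r. fa_var (f r) \<in> fa_carrier" by (simp add: fa_carrier_var)
    have "lapp (eval_op h w) vacuum (top_exps p M 1, top_set M 1) = 0" if h: "\<forall>i. h i \<in> Dgraph"
      for h :: "nat \<Rightarrow> 'k linop"
    proof -
      let ?ks = "map (\<lambda>r. kappa_op p (h (f (2*r - 1))) (h (f (2*r)))) [1..<j+1]"
      have "eval_op h w = prod_list ?ks"
        unfolding w eval_op_w_poly[OF vars] by (simp add: eval_op_var)
      moreover have "cohom_homog (2 * length ?ks) (prod_list ?ks)"
        using h by (intro cohom_homog_prod_list) (auto intro: cohom_homog_kappa_op[OF two p])
      ultimately show ?thesis using cohom_homog_vacuum[OF _ _ fin top] card j by simp
    qed
    then show ?thesis unfolding sep_space_def w by (simp add: fa_carrier_w_poly[OF vars])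
  qed
  ultimately show ?thesis by blast
qed

lemma w_poly_notin_sep_space:
  assumes "(2::'k::field) \<noteq> 0"
  shows "w_poly p (M + 1) fa_var \<notin> (sep_space p M :: 'k fa set)"
proof
  assume "w_poly p (M + 1) fa_var \<in> (sep_space p M :: 'k fa set)"
  then have "lapp (eval_op t_plus_e (w_poly p (M + 1) fa_var)) (vacuum :: 'k svec)
      (top_exps p M 1, top_set M 1) = 0"
    using t_plus_e_Dgraph unfolding sep_space_def by blast
  moreover have "eval_op t_plus_e (w_poly p (M + 1) fa_var) =
      prod_list (map (\<lambda>r. kappa_op p (t_plus_e (2*r - 1)) (t_plus_e (2*r) :: 'k linop)) [1..<M+2])"
    by (simp add: eval_op_w_poly fa_carrier_var eval_op_var)
  ultimately have "(2::'k) ^ (M + 1) = 0"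
    using kappa_op_t_plus_e_prod_vacuum[OF assms, of 1 M p] by (simp add: basis_vec_def)
  with assms show False by simp
qed

lemma w_poly_vars_in_W':
  assumes "1 \<le> m"
  shows "w_poly p m fa_var \<in> W' p"
proof -
  have "(\<lambda>r::nat. r) \<in> I_set m" unfolding I_set_def by (auto simp: strict_mono_on_def)
  then have "w_poly p m fa_var \<in> W_set p m"
    unfolding W_set_def mem_Collect_eq using assms by (intro exI[of _ m] exI[of _ "\<lambda>r::nat. r"]) simp
  then show ?thesis unfolding W'_def W_all_def using assms by auto
qed

lemma W'_eq_UN: "W' p = (\<Union>M. {fa_one} \<union> W_set p M)"
  unfolding W'_def W_all_def W_set_def by auto

theorem corollary3p2:
  fixes p :: nat
  assumes "prime p" and "p > 2" and "CHAR('k::field) = p"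
  shows "\<not> finitely_based (T_closure (W' p :: 'k fa set))"
proof -
  have char: "of_nat p = (0::'k)" using assms(3) of_nat_CHAR[where 'a='k] by simp
  have two: "(2::'k) \<noteq> 0"
  proof
    assume "(2::'k) = 0"
    then have "p dvd 2" using of_nat_eq_0_iff_char_dvd[where 'a='k, of 2] assms(3) by simp
    with assms(2) show False by (auto dest: dvd_imp_le)
  qed
  show ?thesis unfolding W'_eq_UN
  proof (rule not_finitely_based_T_closure_UN[where V = "sep_space p"])
    show "mono (\<lambda>M. {fa_one} \<union> (W_set p M :: 'k fa set))"
      unfolding W_set_def by (intro monoI) auto
    show "T_space (sep_space p M :: 'k fa set)" for M by (rule T_space_sep_space)
    show "{fa_one} \<union> W_set p M \<subseteq> (sep_space p M :: 'k fa set)" for M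
      using assms(2) by (intro W_subset_sep_space two char) simp
    show "\<not> (\<Union>N. {fa_one} \<union> W_set p N) \<subseteq> (sep_space p M :: 'k fa set)" for M
      using w_poly_vars_in_W'[of "M + 1" p] w_poly_notin_sep_space[OF two, of p M]
      unfolding W'_eq_UN by auto
  qed
qed

end
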